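(* Let $\Omega\subset\mathbb{R}^3$ be a domain with boundary $\partial\Omega$ and outward unit normal $\mathbf{n}$, and consider a non-isentropic, non-reactive Newtonian compressible fluid on $\Omega$ with state $\boldsymbol{x}=(\rho,\mathbf{v}^{\mathsf T},s)^{\mathsf T}$ governed by $$\partial_t\rho=-\mathrm{div}(\rho\mathbf{v}),$$ $$\partial_t\mathbf{v}=-\nabla\!\left(\tfrac12\mathbf{v}\cdot\mathbf{v}+h\right)-G_{\boldsymbol{\omega}}\mathbf{v}+T\nabla s-\frac{1}{\rho}\mathrm{Div}\,\boldsymbol{\tau},$$ $$\partial_t s=-\mathbf{v}\cdot\nabla s-\frac{\boldsymbol{\tau}}{\rho T}:\mathrm{Grad}\,\mathbf{v}-\frac{\mathbf{q}_s}{\rho T}\cdot\nabla T-\frac{1}{\rho}\mathrm{div}\,\mathbf{q}_s,$$ with total energy $\mathcal{H}=\int_\Omega \tfrac12\rho\,\mathbf{v}\cdot\mathbf{v}+\rho\,u(\rho,s)$ and efforts $\mathbf{e}=(e_\rho,\mathbf{e}_{\mathbf{v}}^{\mathsf T},e_s)^{\mathsf T}=(\delta_\rho\mathcal{H},\delta_{\mathbf{v}}\mathcal{H}^{\mathsf T},\delta_s\mathcal{H})^{\mathsf T}=(\tfrac12\mathbf{v}\cdot\mathbf{v}+h,\ \rho\mathbf{v}^{\mathsf T},\ \rho T)^{\mathsf T}$. Then these governing equations can be written as the pseudo infinite-dimensional port-Hamiltonian system $$\partial_t\boldsymbol{x}=\mathcal{J}\mathbf{e},\qquad \mathcal{J}=\begin{bmatrix}0&-\mathrm{div}&0\\-\nabla&-\frac{1}{\rho}G_{\boldsymbol{\omega}}&\mathcal{J}_{\boldsymbol{\tau}}\\0&-\mathcal{J}_{\boldsymbol{\tau}}^{*}&\mathcal{Q}_T-\mathcal{G}_T^{*}S_T\mathcal{G}_T\end{bmatrix},$$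 and along solutions the energy satisfies $$\frac{d\mathcal{H}}{dt}=\langle \mathbf{e}_\partial,\mathbf{f}_\partial\rangle_{\partial\Omega}=-\int_{\partial\Omega}\Big[e_\rho\,(\mathbf{e}_{\mathbf{v}}\cdot\mathbf{n})+\boldsymbol{\tau}:\big(\mathbf{v}\mathbf{n}^{\mathsf T}\big)+T\,(\mathbf{q}_s\cdot\mathbf{n})\Big],$$ i.e. the power supplied through $\partial\Omega$ with boundary flows $\mathbf{f}_\partial=\big(-(\mathbf{e}_{\mathbf{v}}\cdot\mathbf{n}),\,-\mathbf{v}\mathbf{n}^{\mathsf T},\,-(\mathbf{q}_s\cdot\mathbf{n})\big)\big|_{\partial\Omega}$ and boundary efforts $\mathbf{e}_\partial=\big(e_\rho,\,\boldsymbol{\tau},\,T\big)\big|_{\partial\Omega}$ (the middle pairing being the tensor product $:$).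
   Context: Notation: $\rho>0$ density, $\mathbf{v}$ velocity, $s$ specific entropy, $T>0$ temperature, $u(\rho,s)$ specific internal energy satisfying the Gibbs relation $du=-p\,d(1/\rho)+T\,ds$ (so $T=\partial_s u$, $p=\rho^2\partial_\rho u$ the static pressure), $h=u+p/\rho$ the enthalpy. The viscous tensor is $\boldsymbol{\tau}=-\mu(\mathrm{Grad}\,\mathbf{v}+(\mathrm{Grad}\,\mathbf{v})^{\mathsf T}-\frac23(\mathrm{div}\,\mathbf{v})I)-\kappa(\mathrm{div}\,\mathbf{v})I$ with shear and dilatational viscosities $\mu,\kappa$; the heat flux is $\mathbf{q}=-K\nabla T$ and the entropy flux is $\mathbf{q}_s=-\frac{K}{T}\nabla T$, with $K$ a nonnegative thermal conductivity matrix. The vorticity is $\boldsymbol{\omega}=\mathrm{curl}\,\mathbf{v}=(\omega_1,\omega_2,\omega_3)^{\mathsf T}$ and the gyroscope is the skew-symmetric matrix $G_{\boldsymbol{\omega}}=\begin{bmatrix}0&-\omega_3&\omega_2\\\omega_3&0&-\omega_1\\-\omega_2&\omega_1&0\end{bmatrix}$, so $G_{\boldsymbol{\omega}}\mathbf{v}=\boldsymbol{\omega}\times\mathbf{v}$. Operators: $\mathcal{J}_{\boldsymbol{\tau}}e=\nabla s\,\frac{e}{\rho}-\frac{1}{\rho}\mathrm{Div}\big(\frac{\boldsymbol{\tau}}{\rho T}e\big)$; $\mathcal{J}_{\boldsymbol{\tau}}^{*}\mathbf{w}=\nabla s\cdot\frac{\mathbf{w}}{\rho}+\frac{\boldsymbol{\tau}}{\rho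 T}:\mathrm{Grad}\frac{\mathbf{w}}{\rho}$; $S_T=K/T$; $\mathcal{G}_T e=-\nabla(e/\rho)$; $\mathcal{G}_T^{*}\mathbf{w}=\frac1\rho\mathrm{div}\,\mathbf{w}$; $\mathcal{Q}_T e=\frac{1}{\rho T}\|\nabla\frac{e}{\rho}\|^2_{S_T}$ where $\|\mathbf{a}\|_X^2=\mathbf{a}^{\mathsf T}X^{\mathsf T}\mathbf{a}$. $A:B=\mathrm{tr}(A^{\mathsf T}B)$; $\mathrm{Grad}$ and $\mathrm{Div}$ denote the gradient of a vector field and divergence of a tensor field, with $\int_\Omega(\mathrm{Div}A)\cdot\mathbf{u}+\int_\Omega A:\mathrm{Grad}\,\mathbf{u}=\int_{\partial\Omega}(A\mathbf{u})\cdot\mathbf{n}$ for symmetric $A$. "Pseudo port-Hamiltonian" refers to the fact that the coefficients of $\mathcal{J}$ depend on the effort $e_s=\rho T$. *)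

theory Defs
  imports "HOL-Analysis.Analysis"
begin

definition C1_on :: "'a::euclidean_space set \<Rightarrow> ('a \<Rightarrow> 'b::real_normed_vector) \<Rightarrow> bool" where
  "C1_on U f \<longleftrightarrow> (\<exists>f'. (\<forall>x\<in>U. (f has_derivative blinfun_apply (f' x)) (at x)) \<and> continuous_on U f')"

definition C2_on :: "'a::euclidean_space set \<Rightarrow> ('a \<Rightarrow> 'b::real_normed_vector) \<Rightarrow> bool" where
  "C2_on U f \<longleftrightarrow> (\<exists>f'. (\<forall>x\<in>U. (f has_derivative blinfun_apply (f' x)) (at x)) \<and> C1_on U f')"

definition C3_on :: "'a::euclidean_space set \<Rightarrow> ('a \<Rightarrow> 'b::real_normed_vector) \<Rightarrow> bool" where
  "C3_on U f \<longleftrightarrow> (\<exists>f'. (\<forall>x\<in>U. (f has_derivative blinfun_apply (f' x)) (at x)) \<and> C2_on U f')"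

definition pd :: "3 \<Rightarrow> (real^3 \<Rightarrow> 'b::real_normed_vector) \<Rightarrow> real^3 \<Rightarrow> 'b" where
  "pd i f x = frechet_derivative f (at x) (axis i 1)"

definition grad :: "(real^3 \<Rightarrow> real) \<Rightarrow> real^3 \<Rightarrow> real^3" where
  "grad f x = (\<chi> i. pd i f x)"

definition divg :: "(real^3 \<Rightarrow> real^3) \<Rightarrow> real^3 \<Rightarrow> real" where
  "divg F x = (\<Sum>i\<in>UNIV. pd i (\<lambda>y. F y $ i) x)"

definition Grad :: "(real^3 \<Rightarrow> real^3) \<Rightarrow> real^3 \<Rightarrow> real^3^3" where
  "Grad F x = (\<chi> i j. pd j (\<lambda>y. F y $ i) x)"

definition Divt :: "(real^3 \<Rightarrow> real^3^3) \<Rightarrow> real^3 \<Rightarrow> real^3" where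
  "Divt A x = (\<chi> i. \<Sum>j\<in>UNIV. pd j (\<lambda>y. A y $ i $ j) x)"

definition curl :: "(real^3 \<Rightarrow> real^3) \<Rightarrow> real^3 \<Rightarrow> real^3" where
  "curl F x = vector
     [pd 2 (\<lambda>y. F y $ 3) x - pd 3 (\<lambda>y. F y $ 2) x,
      pd 3 (\<lambda>y. F y $ 1) x - pd 1 (\<lambda>y. F y $ 3) x,
      pd 1 (\<lambda>y. F y $ 2) x - pd 2 (\<lambda>y. F y $ 1) x]"

text \<open>Gyroscope matrix of w (rows listed), so gyro w *v v = w x v.\<close>
definition gyro :: "real^3 \<Rightarrow> real^3^3" where
  "gyro w = vector
     [vector [0, - (w $ 3), w $ 2],
      vector [w $ 3, 0, - (w $ 1)],
      vector [- (w $ 2), w $ 1, 0]]"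

definition ddot :: "real^3^3 \<Rightarrow> real^3^3 \<Rightarrow> real" where
  "ddot A B = (\<Sum>i\<in>UNIV. \<Sum>j\<in>UNIV. A $ i $ j * B $ i $ j)"

definition outer :: "real^3 \<Rightarrow> real^3 \<Rightarrow> real^3^3" where
  "outer a b = (\<chi> i j. a $ i * b $ j)"

definition wnorm2 :: "real^3^3 \<Rightarrow> real^3 \<Rightarrow> real" where
  "wnorm2 X a = a \<bullet> (transpose X *v a)"

definition u_rho :: "(real \<Rightarrow> real \<Rightarrow> real) \<Rightarrow> real \<Rightarrow> real \<Rightarrow> real" where
  "u_rho u a b = deriv (\<lambda>r. u r b) a"

definition u_s :: "(real \<Rightarrow> real \<Rightarrow> real) \<Rightarrow> real \<Rightarrow> real \<Rightarrow> real" where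
  "u_s u a b = deriv (\<lambda>r. u a r) b"

definition temp :: "(real \<Rightarrow> real \<Rightarrow> real) \<Rightarrow> (real^3 \<Rightarrow> real) \<Rightarrow> (real^3 \<Rightarrow> real) \<Rightarrow> real^3 \<Rightarrow> real" where
  "temp u \<rho> s x = u_s u (\<rho> x) (s x)"

definition pres :: "(real \<Rightarrow> real \<Rightarrow> real) \<Rightarrow> (real^3 \<Rightarrow> real) \<Rightarrow> (real^3 \<Rightarrow> real) \<Rightarrow> real^3 \<Rightarrow> real" where
  "pres u \<rho> s x = (\<rho> x)\<^sup>2 * u_rho u (\<rho> x) (s x)"

definition enth :: "(real \<Rightarrow> real \<Rightarrow> real) \<Rightarrow> (real^3 \<Rightarrow> real) \<Rightarrow> (real^3 \<Rightarrow> real) \<Rightarrow> real^3 \<Rightarrow> real" where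
  "enth u \<rho> s x = u (\<rho> x) (s x) + pres u \<rho> s x / \<rho> x"

definition visc :: "real \<Rightarrow> real \<Rightarrow> (real^3 \<Rightarrow> real^3) \<Rightarrow> real^3 \<Rightarrow> real^3^3" where
  "visc \<mu> \<kappa> v x =
     - (\<mu> *\<^sub>R (Grad v x + transpose (Grad v x) - ((2/3) * divg v x) *\<^sub>R mat 1))
     - (\<kappa> * divg v x) *\<^sub>R mat 1"

definition entflux :: "real^3^3 \<Rightarrow> (real^3 \<Rightarrow> real) \<Rightarrow> real^3 \<Rightarrow> real^3" where
  "entflux K T x = - ((1 / T x) *\<^sub>R (K *v grad T x))"

definition rhs_rho :: "(real^3 \<Rightarrow> real) \<Rightarrow> (real^3 \<Rightarrow> real^3) \<Rightarrow> real^3 \<Rightarrow> real" where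
  "rhs_rho \<rho> v x = - divg (\<lambda>y. \<rho> y *\<^sub>R v y) x"

definition rhs_v :: "(real \<Rightarrow> real \<Rightarrow> real) \<Rightarrow> real \<Rightarrow> real \<Rightarrow>
    (real^3 \<Rightarrow> real) \<Rightarrow> (real^3 \<Rightarrow> real^3) \<Rightarrow> (real^3 \<Rightarrow> real) \<Rightarrow> real^3 \<Rightarrow> real^3" where
  "rhs_v u \<mu> \<kappa> \<rho> v s x =
     - grad (\<lambda>y. (1/2) * (v y \<bullet> v y) + enth u \<rho> s y) x
     - gyro (curl v x) *v v x
     + temp u \<rho> s x *\<^sub>R grad s x
     - (1 / \<rho> x) *\<^sub>R Divt (visc \<mu> \<kappa> v) x"

definition rhs_s :: "(real \<Rightarrow> real \<Rightarrow> real) \<Rightarrow> real \<Rightarrow> real \<Rightarrow> real^3^3 \<Rightarrow>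
    (real^3 \<Rightarrow> real) \<Rightarrow> (real^3 \<Rightarrow> real^3) \<Rightarrow> (real^3 \<Rightarrow> real) \<Rightarrow> real^3 \<Rightarrow> real" where
  "rhs_s u \<mu> \<kappa> K \<rho> v s x =
     (let T = temp u \<rho> s; qs = entflux K T in
      - (v x \<bullet> grad s x)
      - ddot ((1 / (\<rho> x * T x)) *\<^sub>R visc \<mu> \<kappa> v x) (Grad v x)
      - ((1 / (\<rho> x * T x)) *\<^sub>R qs x) \<bullet> grad T x
      - (1 / \<rho> x) * divg qs x)"

definition eff_rho :: "(real \<Rightarrow> real \<Rightarrow> real) \<Rightarrow> (real^3 \<Rightarrow> real) \<Rightarrow> (real^3 \<Rightarrow> real^3) \<Rightarrow> (real^3 \<Rightarrow> real) \<Rightarrow> real^3 \<Rightarrow> real" where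
  "eff_rho u \<rho> v s x = (1/2) * (v x \<bullet> v x) + enth u \<rho> s x"

definition eff_v :: "(real^3 \<Rightarrow> real) \<Rightarrow> (real^3 \<Rightarrow> real^3) \<Rightarrow> real^3 \<Rightarrow> real^3" where
  "eff_v \<rho> v x = \<rho> x *\<^sub>R v x"

definition eff_s :: "(real \<Rightarrow> real \<Rightarrow> real) \<Rightarrow> (real^3 \<Rightarrow> real) \<Rightarrow> (real^3 \<Rightarrow> real) \<Rightarrow> real^3 \<Rightarrow> real" where
  "eff_s u \<rho> s x = \<rho> x * temp u \<rho> s x"

definition Ham :: "(real^3) set \<Rightarrow> (real \<Rightarrow> real \<Rightarrow> real) \<Rightarrow> (real^3 \<Rightarrow> real) \<Rightarrow> (real^3 \<Rightarrow> real^3) \<Rightarrow> (real^3 \<Rightarrow> real) \<Rightarrow> real" where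
  "Ham \<Omega> u \<rho> v s = integral \<Omega> (\<lambda>x. (1/2) * \<rho> x * (v x \<bullet> v x) + \<rho> x * u (\<rho> x) (s x))"

definition J_tau :: "(real^3 \<Rightarrow> real) \<Rightarrow> (real^3 \<Rightarrow> real) \<Rightarrow> (real^3 \<Rightarrow> real^3^3) \<Rightarrow> (real^3 \<Rightarrow> real)
    \<Rightarrow> (real^3 \<Rightarrow> real) \<Rightarrow> real^3 \<Rightarrow> real^3" where
  "J_tau \<rho> s \<tau> T e x =
     (e x / \<rho> x) *\<^sub>R grad s x - (1 / \<rho> x) *\<^sub>R Divt (\<lambda>y. (e y / (\<rho> y * T y)) *\<^sub>R \<tau> y) x"

definition J_tau_adj :: "(real^3 \<Rightarrow> real) \<Rightarrow> (real^3 \<Rightarrow> real) \<Rightarrow> (real^3 \<Rightarrow> real^3^3) \<Rightarrow> (real^3 \<Rightarrow> real)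
    \<Rightarrow> (real^3 \<Rightarrow> real^3) \<Rightarrow> real^3 \<Rightarrow> real" where
  "J_tau_adj \<rho> s \<tau> T w x =
     grad s x \<bullet> ((1 / \<rho> x) *\<^sub>R w x)
     + ddot ((1 / (\<rho> x * T x)) *\<^sub>R \<tau> x) (Grad (\<lambda>y. (1 / \<rho> y) *\<^sub>R w y) x)"

definition S_T :: "real^3^3 \<Rightarrow> (real^3 \<Rightarrow> real) \<Rightarrow> real^3 \<Rightarrow> real^3^3" where
  "S_T K T x = (1 / T x) *\<^sub>R K"

definition G_T :: "(real^3 \<Rightarrow> real) \<Rightarrow> (real^3 \<Rightarrow> real) \<Rightarrow> real^3 \<Rightarrow> real^3" where
  "G_T \<rho> e x = - grad (\<lambda>y. e y / \<rho> y) x"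

definition G_T_adj :: "(real^3 \<Rightarrow> real) \<Rightarrow> (real^3 \<Rightarrow> real^3) \<Rightarrow> real^3 \<Rightarrow> real" where
  "G_T_adj \<rho> w x = (1 / \<rho> x) * divg w x"

definition Q_T :: "real^3^3 \<Rightarrow> (real^3 \<Rightarrow> real) \<Rightarrow> (real^3 \<Rightarrow> real) \<Rightarrow> (real^3 \<Rightarrow> real) \<Rightarrow> real^3 \<Rightarrow> real" where
  "Q_T K \<rho> T e x = (1 / (\<rho> x * T x)) * wnorm2 (S_T K T x) (grad (\<lambda>y. e y / \<rho> y) x)"

definition J_op :: "(real \<Rightarrow> real \<Rightarrow> real) \<Rightarrow> real \<Rightarrow> real \<Rightarrow> real^3^3 \<Rightarrow>
    (real^3 \<Rightarrow> real) \<Rightarrow> (real^3 \<Rightarrow> real^3) \<Rightarrow> (real^3 \<Rightarrow> real) \<Rightarrow>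
    (real^3 \<Rightarrow> real) \<Rightarrow> (real^3 \<Rightarrow> real^3) \<Rightarrow> (real^3 \<Rightarrow> real) \<Rightarrow> real^3 \<Rightarrow> real \<times> (real^3) \<times> real" where
  "J_op u \<mu> \<kappa> K \<rho> v s e\<^sub>\<rho> e\<^sub>v e\<^sub>s x =
     (let \<tau> = visc \<mu> \<kappa> v; T = temp u \<rho> s in
      ( - divg e\<^sub>v x,
        - grad e\<^sub>\<rho> x - (1 / \<rho> x) *\<^sub>R (gyro (curl v x) *v e\<^sub>v x) + J_tau \<rho> s \<tau> T e\<^sub>s x,
        - J_tau_adj \<rho> s \<tau> T e\<^sub>v x + Q_T K \<rho> T e\<^sub>s x
          - G_T_adj \<rho> (\<lambda>y. S_T K T y *v G_T \<rho> e\<^sub>s y) x))"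

definition bnd_pairing :: "(real^3) measure \<Rightarrow>
    (real^3 \<Rightarrow> real) \<Rightarrow> (real^3 \<Rightarrow> real^3^3) \<Rightarrow> (real^3 \<Rightarrow> real) \<Rightarrow>
    (real^3 \<Rightarrow> real) \<Rightarrow> (real^3 \<Rightarrow> real^3^3) \<Rightarrow> (real^3 \<Rightarrow> real) \<Rightarrow> real" where
  "bnd_pairing \<sigma> e1 E2 e3 f1 F2 f3 = (\<integral>x. e1 x * f1 x + ddot (E2 x) (F2 x) + e3 x * f3 x \<partial>\<sigma>)"

end

theory Submission
  imports Defs
begin

(* The efforts are the variational derivatives of H; in particular e_v / rho = v, e_s / rho = T and
   e_s / (rho T) = 1, and with these identities the three rows of J e reduce to the right-hand sides
   of the governing equations.

   The energy density has a time derivative that is jointly continuous on I x closure Omega, so H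
   can be differentiated under the integral sign, and the chain rule gives dH/dt = int e . dx/dt.
   Pointwise, e . dx/dt = - div F for the energy flux F = e_rho e_v + tau^T v + T q_s: the
   gyroscopic term drops out since v . (omega x v) = 0, the terms rho T v . grad s of the momentum
   and entropy equations cancel, and what remains are product rules for the divergence.  Gauss's
   theorem turns - int div F into - int F . n over the boundary, which is the boundary pairing. *)

section \<open>Continuously differentiable functions\<close>

lemma C1_on_differentiable: "C1_on U f \<Longrightarrow> x \<in> U \<Longrightarrow> f differentiable (at x)"
  unfolding C1_on_def differentiable_def by blast

lemma C1_on_imp_continuous_on: "C1_on U f \<Longrightarrow> continuous_on U f"
  by (meson C1_on_differentiable continuous_at_imp_continuous_on differentiable_imp_continuous_within)

lemma C1_on_iff_partial_derivatives:
  fixes f :: "'a::euclidean_space \<Rightarrow> 'b::real_normed_vector"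
  assumes U: "open U"
  shows "C1_on U f \<longleftrightarrow> (\<forall>x\<in>U. f differentiable (at x)) \<and>
     (\<forall>b\<in>Basis. continuous_on U (\<lambda>x. frechet_derivative f (at x) b))"
proof
  assume "C1_on U f"
  then obtain f' where d: "\<forall>x\<in>U. (f has_derivative blinfun_apply (f' x)) (at x)"
    and c: "continuous_on U f'"
    unfolding C1_on_def by blast
  have "continuous_on U (\<lambda>x. frechet_derivative f (at x) b)" for b
  proof -
    have "continuous_on U (\<lambda>x. blinfun_apply (f' x) b)"
      by (intro blinfun.continuous_on c continuous_on_const)
    then show ?thesis
      by (rule continuous_on_eq) (use d frechet_derivative_at in fastforce)
  qed
  with d show "(\<forall>x\<in>U. f differentiable (at x)) \<and>
     (\<forall>b\<in>Basis. continuous_on U (\<lambda>x. frechet_derivative f (at x) b))"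
    using differentiable_def by blast
next
  assume H: "(\<forall>x\<in>U. f differentiable (at x)) \<and>
     (\<forall>b\<in>Basis. continuous_on U (\<lambda>x. frechet_derivative f (at x) b))"
  define f' where "f' x = Blinfun (frechet_derivative f (at x))" for x
  have f': "x \<in> U \<Longrightarrow> blinfun_apply (f' x) = frechet_derivative f (at x)" for x
    unfolding f'_def
    by (meson H bounded_linear_Blinfun_apply frechet_derivative_works has_derivative_bounded_linear)
  have "\<forall>x\<in>U. (f has_derivative blinfun_apply (f' x)) (at x)"
    using H f' frechet_derivative_works by fastforce
  moreover have "continuous_on U f'"
  proof (rule continuous_on_blinfun_componentwise)
    fix i :: 'a assume "i \<in> Basis"
    with H f' show "continuous_on U (\<lambda>x. blinfun_apply (f' x) i)"
      by (metis (no_types, lifting) continuous_on_eq)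
  qed
  ultimately show "C1_on U f" unfolding C1_on_def by blast
qed

lemma C1_on_const: "C1_on U (\<lambda>x. c)"
  unfolding C1_on_def by (intro exI[of _ "\<lambda>x. 0"]) (auto intro!: derivative_eq_intros)

lemma C1_on_add:
  assumes "C1_on U f" and "C1_on U g"
  shows "C1_on U (\<lambda>x. f x + g x)"
proof -
  obtain f' g' where "\<forall>x\<in>U. (f has_derivative blinfun_apply (f' x)) (at x)" "continuous_on U f'"
    "\<forall>x\<in>U. (g has_derivative blinfun_apply (g' x)) (at x)" "continuous_on U g'"
    using assms unfolding C1_on_def by blast
  then show ?thesis
    unfolding C1_on_def
    by (intro exI[of _ "\<lambda>x. f' x + g' x"])
       (auto intro!: derivative_eq_intros continuous_intros simp: blinfun.add_left)
qed

lemma C1_on_sum: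
  "finite A \<Longrightarrow> (\<And>a. a \<in> A \<Longrightarrow> C1_on U (f a)) \<Longrightarrow> C1_on U (\<lambda>x. \<Sum>a\<in>A. f a x)"
  by (induction A rule: finite_induct) (auto simp: C1_on_const intro!: C1_on_add)

lemma C1_on_linear:
  assumes L: "bounded_linear L" and f: "C1_on U f"
  shows "C1_on U (\<lambda>x. L (f x))"
proof -
  obtain f' where d: "\<forall>x\<in>U. (f has_derivative blinfun_apply (f' x)) (at x)"
    and c: "continuous_on U f'"
    using f unfolding C1_on_def by blast
  have L': "blinfun_apply (Blinfun L o\<^sub>L f' x) = (\<lambda>h. L (f' x h))" for x
    by (rule ext) (simp add: bounded_linear_Blinfun_apply[OF L])
  have "\<forall>x\<in>U. ((\<lambda>x. L (f x)) has_derivative blinfun_apply (Blinfun L o\<^sub>L f' x)) (at x)"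
    unfolding L' using d bounded_linear.has_derivative[OF L] by blast
  moreover have "continuous_on U (\<lambda>x. Blinfun L o\<^sub>L f' x)"
    by (intro continuous_intros c)
  ultimately show ?thesis
    unfolding C1_on_def by (intro exI[of _ "\<lambda>x. Blinfun L o\<^sub>L f' x"]) blast
qed

lemma C1_on_minus: "C1_on U f \<Longrightarrow> C1_on U (\<lambda>x. - f x)"
  by (rule C1_on_linear[OF bounded_linear_minus[OF bounded_linear_ident]])

lemma C1_on_diff: "C1_on U f \<Longrightarrow> C1_on U g \<Longrightarrow> C1_on U (\<lambda>x. f x - g x)"
  using C1_on_add[OF _ C1_on_minus, of U f g] by simp

lemma C1_on_cmult: "C1_on U f \<Longrightarrow> C1_on U (\<lambda>x. c * f x :: real)"
  by (rule C1_on_linear[OF bounded_linear_mult_right])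

lemma C1_on_vec_nth: "C1_on U F \<Longrightarrow> C1_on U (\<lambda>x. F x $ i)"
  by (rule C1_on_linear[OF bounded_linear_vec_nth])

lemma C1_on_vec_lambda:
  fixes f :: "'i::finite \<Rightarrow> 'a::euclidean_space \<Rightarrow> real"
  assumes "\<And>i. C1_on U (f i)"
  shows "C1_on U (\<lambda>x. \<chi> i. f i x)"
proof -
  have "(\<chi> i. f i x) = (\<Sum>i\<in>UNIV. f i x *\<^sub>R axis i 1)" for x
    by (simp add: vec_eq_iff axis_def if_distrib cong: if_cong)
  then show ?thesis
    by (simp only:) (rule C1_on_sum, simp, rule C1_on_linear[OF bounded_linear_scaleR_left assms])
qed

lemma has_derivative_compose_blinfun:
  assumes "(f has_derivative blinfun_apply f') (at x)" and "(g has_derivative blinfun_apply g') (at (f x))"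
  shows "((\<lambda>x. g (f x)) has_derivative blinfun_apply (g' o\<^sub>L f')) (at x)"
proof -
  have "blinfun_apply (g' o\<^sub>L f') = blinfun_apply g' \<circ> blinfun_apply f'"
    by (rule ext) simp
  with diff_chain_at[OF assms] show ?thesis by (simp add: o_def)
qed

lemma C1_on_compose:
  assumes g: "C1_on W g" and f: "C1_on U f" and fU: "f ` U \<subseteq> W"
  shows "C1_on U (\<lambda>x. g (f x))"
proof -
  obtain f' where df: "\<forall>x\<in>U. (f has_derivative blinfun_apply (f' x)) (at x)"
    and cf: "continuous_on U f'"
    using f unfolding C1_on_def by blast
  obtain g' where dg: "\<forall>y\<in>W. (g has_derivative blinfun_apply (g' y)) (at y)"
    and cg: "continuous_on W g'"
    using g unfolding C1_on_def by blast
  have "\<forall>x\<in>U. ((\<lambda>x. g (f x)) has_derivative blinfun_apply (g' (f x) o\<^sub>L f' x)) (at x)"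
    using df dg fU by (blast intro: has_derivative_compose_blinfun)
  moreover have "continuous_on U (\<lambda>x. g' (f x) o\<^sub>L f' x)"
    by (intro continuous_intros cf continuous_on_compose2[OF cg C1_on_imp_continuous_on[OF f] fU])
  ultimately show ?thesis
    unfolding C1_on_def by (intro exI[of _ "\<lambda>x. g' (f x) o\<^sub>L f' x"]) blast
qed

lemma C1_on_cong:
  assumes "open U" "\<And>x. x \<in> U \<Longrightarrow> f x = g x" "C1_on U f"
  shows "C1_on U g"
proof -
  obtain f' where d: "\<forall>x\<in>U. (f has_derivative blinfun_apply (f' x)) (at x)" and c: "continuous_on U f'"
    using assms unfolding C1_on_def by blast
  have "\<forall>x\<in>U. (g has_derivative blinfun_apply (f' x)) (at x)"
    using d assms has_derivative_transform_within_open by metis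
  with c show ?thesis unfolding C1_on_def by blast
qed

lemma C1_on_bilinear:
  fixes f :: "'a::euclidean_space \<Rightarrow> 'b::real_normed_vector" and g :: "'a \<Rightarrow> 'c::real_normed_vector"
  assumes B: "bounded_bilinear B" and U: "open U" and f: "C1_on U f" and g: "C1_on U g"
  shows "C1_on U (\<lambda>x. B (f x) (g x))"
proof -
  have D: "((\<lambda>x. B (f x) (g x)) has_derivative
        (\<lambda>h. B (f x) (frechet_derivative g (at x) h) + B (frechet_derivative f (at x) h) (g x))) (at x)"
    if "x \<in> U" for x
    using bounded_bilinear.FDERIV[OF B] C1_on_differentiable[OF f that] C1_on_differentiable[OF g that]
    unfolding frechet_derivative_works by blast
  show ?thesis
    unfolding C1_on_iff_partial_derivatives[OF U]
  proof (intro conjI ballI)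
    fix x assume "x \<in> U"
    then show "(\<lambda>x. B (f x) (g x)) differentiable at x"
      using D differentiable_def by blast
  next
    fix b :: 'a assume "b \<in> Basis"
    then have "continuous_on U
        (\<lambda>x. B (f x) (frechet_derivative g (at x) b) + B (frechet_derivative f (at x) b) (g x))"
      using f g unfolding C1_on_iff_partial_derivatives[OF U]
      by (intro continuous_intros bounded_bilinear.continuous_on[OF B]
          C1_on_imp_continuous_on[OF f] C1_on_imp_continuous_on[OF g]) auto
    then show "continuous_on U (\<lambda>x. frechet_derivative (\<lambda>x. B (f x) (g x)) (at x) b)"
      by (rule continuous_on_eq) (simp add: frechet_derivative_at[OF D, symmetric])
  qed
qed

lemma C1_on_inverse:
  assumes "C1_on U f" "\<And>x. x \<in> U \<Longrightarrow> f x > 0"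
  shows "C1_on U (\<lambda>x. 1 / f x :: real)"
proof (rule C1_on_compose[OF _ assms(1)])
  have D: "((\<lambda>r::real. 1 / r) has_derivative (*) (- 1 / r\<^sup>2)) (at r)" if "r > 0" for r
    using that unfolding has_field_derivative_def[symmetric]
    by (auto intro!: derivative_eq_intros simp: power2_eq_square field_simps)
  show "C1_on {0<..} (\<lambda>r::real. 1 / r)"
    unfolding C1_on_iff_partial_derivatives[OF open_greaterThan]
  proof (intro conjI ballI)
    fix r :: real assume "r \<in> {0<..}"
    then show "(\<lambda>r. 1 / r) differentiable at r"
      using D differentiable_def by auto
  next
    fix b :: real
    have "continuous_on {0<..} (\<lambda>r::real. (- 1 / r\<^sup>2) * b)"
      by (intro continuous_intros) auto
    then show "continuous_on {0<..} (\<lambda>r. frechet_derivative (\<lambda>r. 1 / r) (at r) b)"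
      by (rule continuous_on_eq) (simp add: frechet_derivative_at[OF D, symmetric])
  qed
qed (use assms(2) in auto)

lemma C2_on_imp_C1_on:
  assumes "C2_on U f"
  shows "C1_on U f"
proof -
  obtain f' where d: "\<forall>x\<in>U. (f has_derivative blinfun_apply (f' x)) (at x)" and c: "C1_on U f'"
    using assms unfolding C2_on_def by blast
  show ?thesis unfolding C1_on_def using d C1_on_imp_continuous_on[OF c] by blast
qed

lemma blinfun_eq_sum_Basis:
  fixes f :: "'a::euclidean_space \<Rightarrow>\<^sub>L 'b::real_normed_vector"
  shows "f = (\<Sum>b\<in>Basis. blinfun_scaleR_left (f b) o\<^sub>L blinfun_inner_left b)"
proof (rule blinfun_euclidean_eqI)
  fix i :: 'a assume i: "i \<in> Basis"
  have "blinfun_apply (\<Sum>b\<in>Basis. blinfun_scaleR_left (f b) o\<^sub>L blinfun_inner_left b) i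
      = (\<Sum>b\<in>Basis. (i \<bullet> b) *\<^sub>R f b)"
    by (simp add: blinfun.sum_left)
  also have "\<dots> = (\<Sum>b\<in>Basis. (if b = i then f b else 0))"
    by (rule sum.cong) (auto simp: inner_Basis i)
  also have "\<dots> = f i"
    using i by simp
  finally show "f i = blinfun_apply (\<Sum>b\<in>Basis. blinfun_scaleR_left (f b) o\<^sub>L blinfun_inner_left b) i"
    by simp
qed

lemma C2_on_iff_partial_derivatives:
  fixes f :: "'a::euclidean_space \<Rightarrow> 'b::real_normed_vector"
  assumes U: "open U"
  shows "C2_on U f \<longleftrightarrow> (\<forall>x\<in>U. f differentiable (at x)) \<and>
     (\<forall>b\<in>Basis. C1_on U (\<lambda>x. frechet_derivative f (at x) b))"
proof
  assume "C2_on U f"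
  then obtain f' where d: "\<forall>x\<in>U. (f has_derivative blinfun_apply (f' x)) (at x)"
    and c: "C1_on U f'"
    unfolding C2_on_def by blast
  have "C1_on U (\<lambda>x. frechet_derivative f (at x) b)" for b
    using C1_on_linear[OF blinfun.bounded_linear_left c]
    by (rule C1_on_cong[OF U, rotated]) (use d frechet_derivative_at in fastforce)
  with d show "(\<forall>x\<in>U. f differentiable (at x)) \<and>
     (\<forall>b\<in>Basis. C1_on U (\<lambda>x. frechet_derivative f (at x) b))"
    using differentiable_def by blast
next
  assume H: "(\<forall>x\<in>U. f differentiable (at x)) \<and>
     (\<forall>b\<in>Basis. C1_on U (\<lambda>x. frechet_derivative f (at x) b))"
  define f' where "f' x = Blinfun (frechet_derivative f (at x))" for x
  have f': "x \<in> U \<Longrightarrow> blinfun_apply (f' x) = frechet_derivative f (at x)" for x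
    unfolding f'_def
    by (meson H bounded_linear_Blinfun_apply frechet_derivative_works has_derivative_bounded_linear)
  have d: "\<forall>x\<in>U. (f has_derivative blinfun_apply (f' x)) (at x)"
    using H f' frechet_derivative_works by fastforce
  have expand: "f' x = (\<Sum>b\<in>Basis.
      blinfun_scaleR_left (frechet_derivative f (at x) b) o\<^sub>L blinfun_inner_left b)" if "x \<in> U" for x
    using blinfun_eq_sum_Basis[of "f' x"] f'[OF that] by simp
  have "C1_on U (\<lambda>x. \<Sum>b\<in>Basis.
      blinfun_scaleR_left (frechet_derivative f (at x) b) o\<^sub>L blinfun_inner_left b)"
  proof (rule C1_on_sum)
    fix b :: 'a assume "b \<in> Basis"
    with H show "C1_on U (\<lambda>x. blinfun_scaleR_left (frechet_derivative f (at x) b) o\<^sub>L blinfun_inner_left b)"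
      by (intro C1_on_bilinear[OF bounded_bilinear_blinfun_compose U]
          C1_on_linear[OF bounded_linear_blinfun_scaleR_left] C1_on_const) auto
  qed simp
  then have "C1_on U f'"
    by (rule C1_on_cong[OF U, rotated]) (simp add: expand)
  then show "C2_on U f" unfolding C2_on_def using d by blast
qed

lemma C2_on_cong:
  assumes U: "open U" and eq: "\<And>x. x \<in> U \<Longrightarrow> f x = g x" and f: "C2_on U f"
  shows "C2_on U g"
proof -
  obtain f' where d: "\<forall>x\<in>U. (f has_derivative blinfun_apply (f' x)) (at x)" and c: "C1_on U f'"
    using f unfolding C2_on_def by blast
  have "\<forall>x\<in>U. (g has_derivative blinfun_apply (f' x)) (at x)"
    using d U eq has_derivative_transform_within_open by metis
  with c show ?thesis unfolding C2_on_def by blast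
qed

lemma C2_on_add:
  assumes f: "C2_on U f" and g: "C2_on U g"
  shows "C2_on U (\<lambda>x. f x + g x)"
proof -
  obtain f' where df: "\<forall>x\<in>U. (f has_derivative blinfun_apply (f' x)) (at x)" and cf: "C1_on U f'"
    using f unfolding C2_on_def by blast
  obtain g' where dg: "\<forall>x\<in>U. (g has_derivative blinfun_apply (g' x)) (at x)" and cg: "C1_on U g'"
    using g unfolding C2_on_def by blast
  have "\<forall>x\<in>U. ((\<lambda>x. f x + g x) has_derivative blinfun_apply (f' x + g' x)) (at x)"
    using df dg by (auto intro!: derivative_eq_intros simp: blinfun.add_left)
  with C1_on_add[OF cf cg] show ?thesis
    unfolding C2_on_def by (intro exI[of _ "\<lambda>x. f' x + g' x"]) blast
qed

lemma C2_on_linear: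
  assumes L: "bounded_linear L" and f: "C2_on U f"
  shows "C2_on U (\<lambda>x. L (f x))"
proof -
  obtain f' where d: "\<forall>x\<in>U. (f has_derivative blinfun_apply (f' x)) (at x)" and c: "C1_on U f'"
    using f unfolding C2_on_def by blast
  have L': "blinfun_apply (Blinfun L o\<^sub>L f' x) = (\<lambda>h. L (f' x h))" for x
    by (rule ext) (simp add: bounded_linear_Blinfun_apply[OF L])
  have "\<forall>x\<in>U. ((\<lambda>x. L (f x)) has_derivative blinfun_apply (Blinfun L o\<^sub>L f' x)) (at x)"
    unfolding L' using d bounded_linear.has_derivative[OF L] by blast
  moreover have "C1_on U (\<lambda>x. Blinfun L o\<^sub>L f' x)"
    by (rule C1_on_linear[OF bounded_bilinear.bounded_linear_right[OF bounded_bilinear_blinfun_compose] c])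
  ultimately show ?thesis
    unfolding C2_on_def by (intro exI[of _ "\<lambda>x. Blinfun L o\<^sub>L f' x"]) blast
qed

lemma C2_on_vec_nth: "C2_on U F \<Longrightarrow> C2_on U (\<lambda>x. F x $ i)"
  by (rule C2_on_linear[OF bounded_linear_vec_nth])

lemma C2_on_Pair:
  fixes f g :: "'a::euclidean_space \<Rightarrow> real"
  assumes "C2_on U f" "C2_on U g"
  shows "C2_on U (\<lambda>x. (f x, g x))"
proof -
  have "C2_on U (\<lambda>x. (f x, 0::real) + (0::real, g x))"
    by (intro C2_on_add C2_on_linear[OF _ assms(1)] C2_on_linear[OF _ assms(2)])
       (auto intro!: bounded_linear_Pair bounded_linear_ident bounded_linear_zero)
  then show ?thesis by simp
qed

lemma C2_on_compose:
  assumes U: "open U" and g: "C2_on W g" and f: "C2_on U f" and fU: "f ` U \<subseteq> W"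
  shows "C2_on U (\<lambda>x. g (f x))"
proof -
  obtain f' where df: "\<forall>x\<in>U. (f has_derivative blinfun_apply (f' x)) (at x)" and cf: "C1_on U f'"
    using f unfolding C2_on_def by blast
  obtain g' where dg: "\<forall>y\<in>W. (g has_derivative blinfun_apply (g' y)) (at y)" and cg: "C1_on W g'"
    using g unfolding C2_on_def by blast
  have "\<forall>x\<in>U. ((\<lambda>x. g (f x)) has_derivative blinfun_apply (g' (f x) o\<^sub>L f' x)) (at x)"
    using df dg fU by (blast intro: has_derivative_compose_blinfun)
  moreover have "C1_on U (\<lambda>x. g' (f x) o\<^sub>L f' x)"
    by (intro C1_on_bilinear[OF bounded_bilinear_blinfun_compose U] cf
        C1_on_compose[OF cg C2_on_imp_C1_on[OF f] fU])
  ultimately show ?thesis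
    unfolding C2_on_def by (intro exI[of _ "\<lambda>x. g' (f x) o\<^sub>L f' x"]) blast
qed

lemma C2_on_slice:
  assumes B: "open B" and h: "C2_on (A \<times> B) h" and t: "t \<in> A"
  shows "C2_on B (\<lambda>x. h (t, x))"
proof -
  have "C2_on B (\<lambda>x. (t, x))"
    unfolding C2_on_def
    by (intro exI[of _ "\<lambda>x. Blinfun (\<lambda>k. (0, k))"])
       (auto intro!: derivative_eq_intros C1_on_const simp: bounded_linear_Blinfun_apply bounded_linear_Pair)
  then show ?thesis using C2_on_compose[OF B h] t by blast
qed

lemma C3_on_imp_C2_on:
  assumes "C3_on U f"
  shows "C2_on U f"
proof -
  obtain f' where d: "\<forall>x\<in>U. (f has_derivative blinfun_apply (f' x)) (at x)" and c: "C2_on U f'"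
    using assms unfolding C3_on_def by blast
  show ?thesis unfolding C2_on_def using d C2_on_imp_C1_on[OF c] by blast
qed

lemma C3_on_partial_derivative:
  assumes W: "open W" and g: "C3_on W g"
  shows "C2_on W (\<lambda>p. frechet_derivative g (at p) b)"
proof -
  obtain g' where d: "\<forall>x\<in>W. (g has_derivative blinfun_apply (g' x)) (at x)" and c: "C2_on W g'"
    using g unfolding C3_on_def by blast
  show ?thesis
    using C2_on_linear[OF blinfun.bounded_linear_left c]
    by (rule C2_on_cong[OF W, rotated]) (use d frechet_derivative_at in fastforce)
qed

lemma C1_on_Times_partial_derivative:
  fixes P :: "real \<Rightarrow> 'a::euclidean_space \<Rightarrow> 'b::real_normed_vector"
  assumes P: "C1_on (I \<times> U) (\<lambda>(t, x). P t x)" and I: "open I" and U: "open U"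
  obtains P' where "continuous_on (I \<times> U) P'"
    and "\<And>t x. t \<in> I \<Longrightarrow> x \<in> U \<Longrightarrow> ((\<lambda>t. P t x) has_vector_derivative P' (t, x)) (at t)"
proof
  define P' where "P' p = frechet_derivative (\<lambda>(t, x). P t x) (at p) (1, 0)" for p
  have "(1::real, 0::'a) \<in> Basis" by (simp add: Basis_prod_def)
  then show "continuous_on (I \<times> U) P'"
    using P unfolding P'_def C1_on_iff_partial_derivatives[OF open_Times[OF I U]] by blast
  fix t x assume "t \<in> I" "x \<in> U"
  then have d: "((\<lambda>(t, x). P t x) has_derivative frechet_derivative (\<lambda>(t, x). P t x) (at (t, x))) (at (t, x))"
    using C1_on_differentiable[OF P] frechet_derivative_works by blast
  have "frechet_derivative (\<lambda>(t, x). P t x) (at (t, x)) (h, 0) = h *\<^sub>R P' (t, x)" for h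
    unfolding P'_def using linear_scale[OF has_derivative_linear[OF d], of h "(1, 0)"] by simp
  then show "((\<lambda>t. P t x) has_vector_derivative P' (t, x)) (at t)"
    using diff_chain_at[OF has_derivative_Pair[OF has_derivative_ident has_derivative_const] d]
    unfolding has_vector_derivative_def by (simp add: o_def)
qed

section \<open>Vector calculus in three dimensions\<close>

lemma differentiable_vec_nth: "F differentiable (at x) \<Longrightarrow> (\<lambda>y. F y $ i) differentiable (at x)"
  unfolding differentiable_def using bounded_linear.has_derivative[OF bounded_linear_vec_nth] by blast

lemma has_derivative_pd: "(f has_derivative D) (at x) \<Longrightarrow> pd i f x = D (axis i 1)"
  unfolding pd_def by (simp add: frechet_derivative_at[symmetric])

lemma pd_add:
  assumes "f differentiable (at x)" and "g differentiable (at x)"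
  shows "pd i (\<lambda>y. f y + g y) x = pd i f x + pd i g x"
  using has_derivative_pd[OF has_derivative_add] assms unfolding frechet_derivative_works pd_def by blast

lemma pd_sum:
  assumes "finite A" and "\<And>a. a \<in> A \<Longrightarrow> f a differentiable (at x)"
  shows "pd i (\<lambda>y. \<Sum>a\<in>A. f a y) x = (\<Sum>a\<in>A. pd i (f a) x)"
proof -
  have "((\<lambda>y. \<Sum>a\<in>A. f a y) has_derivative (\<lambda>h. \<Sum>a\<in>A. frechet_derivative (f a) (at x) h)) (at x)"
    using assms by (intro has_derivative_sum) (auto simp: frechet_derivative_works)
  from has_derivative_pd[OF this] show ?thesis by (simp add: pd_def)
qed

lemma pd_bilinear:
  assumes "bounded_bilinear B" and "f differentiable (at x)" and "g differentiable (at x)"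
  shows "pd i (\<lambda>y. B (f y) (g y)) x = B (f x) (pd i g x) + B (pd i f x) (g x)"
  using has_derivative_pd[OF bounded_bilinear.FDERIV[OF assms(1)]] assms(2,3)
  unfolding frechet_derivative_works pd_def by blast

lemma frechet_derivative_eq_on_open:
  assumes "open X" "x \<in> X" "\<And>y. y \<in> X \<Longrightarrow> f y = g y"
  shows "frechet_derivative f (at x) = frechet_derivative g (at x)"
proof -
  have "(f has_derivative D) (at x) \<longleftrightarrow> (g has_derivative D) (at x)" for D
    using has_derivative_transform_within_open assms by metis
  then show ?thesis unfolding frechet_derivative_def by simp
qed

lemma pd_eq_on_open:
  assumes "open X" "x \<in> X" "\<And>y. y \<in> X \<Longrightarrow> f y = g y"
  shows "pd i f x = pd i g x"
  unfolding pd_def using frechet_derivative_eq_on_open[OF assms] by simp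

lemma grad_eq_on_open:
  assumes "open X" "x \<in> X" "\<And>y. y \<in> X \<Longrightarrow> f y = g y"
  shows "grad f x = grad g x"
  unfolding grad_def using pd_eq_on_open[OF assms] by simp

lemma divg_eq_on_open:
  assumes "open X" "x \<in> X" "\<And>y. y \<in> X \<Longrightarrow> F y = G y"
  shows "divg F x = divg G x"
proof -
  have "pd i (\<lambda>y. F y $ j) x = pd i (\<lambda>y. G y $ j) x" for i j
    by (rule pd_eq_on_open[OF assms(1,2)]) (simp add: assms(3))
  then show ?thesis unfolding divg_def by simp
qed

lemma Grad_eq_on_open:
  assumes "open X" "x \<in> X" "\<And>y. y \<in> X \<Longrightarrow> F y = G y"
  shows "Grad F x = Grad G x"
proof -
  have "pd i (\<lambda>y. F y $ j) x = pd i (\<lambda>y. G y $ j) x" for i j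
    by (rule pd_eq_on_open[OF assms(1,2)]) (simp add: assms(3))
  then show ?thesis unfolding Grad_def by simp
qed

lemma Divt_eq_on_open:
  assumes "open X" "x \<in> X" "\<And>y. y \<in> X \<Longrightarrow> F y = G y"
  shows "Divt F x = Divt G x"
proof -
  have "pd i (\<lambda>y. F y $ j $ k) x = pd i (\<lambda>y. G y $ j $ k) x" for i j k
    by (rule pd_eq_on_open[OF assms(1,2)]) (simp add: assms(3))
  then show ?thesis unfolding Divt_def by simp
qed

lemma divg_add:
  assumes "F differentiable (at x)" and "G differentiable (at x)"
  shows "divg (\<lambda>y. F y + G y) x = divg F x + divg G x"
  unfolding divg_def using assms
  by (simp add: pd_add[OF differentiable_vec_nth differentiable_vec_nth] sum.distrib)

lemma divg_scaleR:
  assumes f: "f differentiable (at x)" and G: "G differentiable (at x)"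
  shows "divg (\<lambda>y. f y *\<^sub>R G y) x = f x * divg G x + grad f x \<bullet> G x"
proof -
  have "pd i (\<lambda>y. (f y *\<^sub>R G y) $ i) x = f x * pd i (\<lambda>y. G y $ i) x + pd i f x * G x $ i" for i
    using pd_bilinear[OF bounded_bilinear_mult f differentiable_vec_nth[OF G]] by simp
  then show ?thesis
    unfolding divg_def grad_def inner_vec_def by (simp add: sum.distrib sum_distrib_left)
qed

lemma divg_vector_matrix_mult:
  assumes \<tau>: "\<And>i j. (\<lambda>y. \<tau> y $ i $ j) differentiable (at x)" and V: "V differentiable (at x)"
  shows "divg (\<lambda>y. V y v* \<tau> y) x = V x \<bullet> Divt \<tau> x + ddot (\<tau> x) (Grad V x)"
proof -
  have "pd j (\<lambda>y. (V y v* \<tau> y) $ j) x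
      = (\<Sum>i\<in>UNIV. V x $ i * pd j (\<lambda>y. \<tau> y $ i $ j) x + pd j (\<lambda>y. V y $ i) x * \<tau> x $ i $ j)" for j
    unfolding vector_matrix_mult_def
    using pd_sum[of UNIV "\<lambda>i y. V y $ i * \<tau> y $ i $ j"]
      pd_bilinear[OF bounded_bilinear_mult differentiable_vec_nth[OF V] \<tau>]
      differentiable_mult[OF differentiable_vec_nth[OF V] \<tau>]
    by simp
  then have "divg (\<lambda>y. V y v* \<tau> y) x
     = (\<Sum>j\<in>UNIV. \<Sum>i\<in>UNIV. V x $ i * pd j (\<lambda>y. \<tau> y $ i $ j) x)
       + (\<Sum>j\<in>UNIV. \<Sum>i\<in>UNIV. \<tau> x $ i $ j * pd j (\<lambda>y. V y $ i) x)"
    unfolding divg_def by (simp add: sum.distrib mult.commute)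
  also have "\<dots> = V x \<bullet> Divt \<tau> x + ddot (\<tau> x) (Grad V x)"
    unfolding Divt_def Grad_def ddot_def inner_vec_def
    by (subst (1 2) sum.swap) (simp add: sum_distrib_left)
  finally show ?thesis .
qed

lemma inner_gyro_self: "(v::real^3) \<bullet> (gyro w *v v) = 0"
  unfolding gyro_def inner_vec_def matrix_vector_mult_def
  by (simp add: sum_3 algebra_simps)

lemma ddot_scaleR_left: "ddot (c *\<^sub>R A) B = c * ddot A B"
  unfolding ddot_def by (simp add: sum_distrib_left mult.assoc)

lemma ddot_uminus_right: "ddot A (- B) = - ddot A B"
  unfolding ddot_def by (simp add: sum_negf)

lemma ddot_outer: "ddot A (outer a b) = (a v* A) \<bullet> b"
  unfolding ddot_def outer_def inner_vec_def vector_matrix_mult_def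
  by (subst sum.swap) (simp add: sum_distrib_left sum_distrib_right ac_simps)

lemma wnorm2_eq: "wnorm2 X a = (X *v a) \<bullet> a"
  unfolding wnorm2_def by (metis dot_lmul_matrix inner_commute vector_transpose_matrix)

lemma matrix_vector_mult_uminus_right: "(A::real^'n^'m) *v (- x) = - (A *v x)"
  using matrix_vector_mult_diff_distrib[of A 0 x] by simp

lemma linear_real_pair:
  assumes "linear (D :: real \<times> real \<Rightarrow> real)"
  shows "D (h, k) = h * D (1, 0) + k * D (0, 1)"
proof -
  have "D (h, k) = D (h *\<^sub>R (1, 0) + k *\<^sub>R (0, 1))" by simp
  also have "\<dots> = h * D (1, 0) + k * D (0, 1)"
    using assms by (simp only: linear_add linear_scale real_scaleR_def)
  finally show ?thesis .
qed

lemma has_derivative_partial_real_derivatives: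
  fixes g :: "real \<times> real \<Rightarrow> real"
  assumes d: "(g has_derivative D) (at (a, b))"
  shows "((\<lambda>r. g (r, b)) has_real_derivative D (1, 0)) (at a)"
    and "((\<lambda>r. g (a, r)) has_real_derivative D (0, 1)) (at b)"
proof -
  have D: "D (h, 0) = D (1, 0) * h" "D (0, h) = D (0, 1) * h" for h
    using linear_real_pair[OF has_derivative_linear[OF d], of h 0]
      linear_real_pair[OF has_derivative_linear[OF d], of 0 h]
    by (simp_all only: mult_zero_left add_0_right add_0_left mult.commute)
  have "(\<lambda>h. D (h, 0)) = (*) (D (1, 0))" "(\<lambda>h. D (0, h)) = (*) (D (0, 1))"
    by (rule ext, rule D)+
  then show "((\<lambda>r. g (r, b)) has_real_derivative D (1, 0)) (at a)"
    and "((\<lambda>r. g (a, r)) has_real_derivative D (0, 1)) (at b)"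
    using diff_chain_at[OF has_derivative_Pair[OF has_derivative_ident has_derivative_const] d]
      diff_chain_at[OF has_derivative_Pair[OF has_derivative_const has_derivative_ident] d]
    unfolding has_field_derivative_def by (simp_all add: o_def)
qed

lemma internal_energy_has_derivative:
  fixes u :: "real \<Rightarrow> real \<Rightarrow> real"
  assumes "(\<lambda>(a, b). u a b) differentiable (at (a, b))"
  shows "u_rho u a b = frechet_derivative (\<lambda>(a, b). u a b) (at (a, b)) (1, 0)"
    and "u_s u a b = frechet_derivative (\<lambda>(a, b). u a b) (at (a, b)) (0, 1)"
    and "((\<lambda>(a, b). u a b) has_derivative (\<lambda>(h, k). h * u_rho u a b + k * u_s u a b)) (at (a, b))"
proof -
  define D where "D = frechet_derivative (\<lambda>(a, b). u a b) (at (a, b))"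
  have d: "((\<lambda>(a, b). u a b) has_derivative D) (at (a, b))"
    using assms unfolding D_def frechet_derivative_works .
  show rho: "u_rho u a b = frechet_derivative (\<lambda>(a, b). u a b) (at (a, b)) (1, 0)"
    and s: "u_s u a b = frechet_derivative (\<lambda>(a, b). u a b) (at (a, b)) (0, 1)"
    using has_derivative_partial_real_derivatives[OF d]
    unfolding u_rho_def u_s_def D_def by (simp_all add: DERIV_imp_deriv)
  have "D p = (\<lambda>(h, k). h * u_rho u a b + k * u_s u a b) p" for p
    unfolding rho s D_def[symmetric]
    using linear_real_pair[OF has_derivative_linear[OF d], of "fst p" "snd p"] by (simp add: split_beta)
  then have "D = (\<lambda>(h, k). h * u_rho u a b + k * u_s u a b)" ..
  with d show "((\<lambda>(a, b). u a b) has_derivative (\<lambda>(h, k). h * u_rho u a b + k * u_s u a b)) (at (a, b))"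
    by simp
qed

lemma internal_energy_partials_continuous_on:
  fixes u :: "real \<Rightarrow> real \<Rightarrow> real"
  assumes W: "open W" and u: "C1_on W (\<lambda>(a, b). u a b)"
  shows "continuous_on W (\<lambda>(a, b). u_rho u a b)" and "continuous_on W (\<lambda>(a, b). u_s u a b)"
proof -
  have "(1::real, 0::real) \<in> Basis" "(0::real, 1::real) \<in> Basis"
    by (simp_all add: Basis_prod_def)
  then have "continuous_on W (\<lambda>p. frechet_derivative (\<lambda>(a, b). u a b) (at p) (1, 0))"
    and "continuous_on W (\<lambda>p. frechet_derivative (\<lambda>(a, b). u a b) (at p) (0, 1))"
    using u unfolding C1_on_iff_partial_derivatives[OF W] by blast+
  moreover have "p \<in> W \<Longrightarrow> (\<lambda>(a, b). u_rho u a b) p = frechet_derivative (\<lambda>(a, b). u a b) (at p) (1, 0)"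
    and "p \<in> W \<Longrightarrow> (\<lambda>(a, b). u_s u a b) p = frechet_derivative (\<lambda>(a, b). u a b) (at p) (0, 1)" for p
    using internal_energy_has_derivative(1,2) C1_on_differentiable[OF u] by (auto split: prod.split)
  ultimately show "continuous_on W (\<lambda>(a, b). u_rho u a b)" "continuous_on W (\<lambda>(a, b). u_s u a b)"
    by (auto cong: continuous_on_cong)
qed

lemma thermodynamic_fields_C2_on:
  fixes R S :: "real^3 \<Rightarrow> real" and u :: "real \<Rightarrow> real \<Rightarrow> real"
  assumes U: "open U" and R: "C2_on U R" and S: "C2_on U S" and R_pos: "\<And>y. y \<in> U \<Longrightarrow> R y > 0"
    and u: "C3_on ({0<..} \<times> UNIV) (\<lambda>(a, b). u a b)"
  shows "C2_on U (\<lambda>y. u (R y) (S y))" and "C2_on U (\<lambda>y. u_rho u (R y) (S y))"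
    and "C2_on U (temp u R S)"
proof -
  define W :: "(real \<times> real) set" where "W = {0<..} \<times> UNIV"
  have W: "open W" unfolding W_def by (intro open_Times) auto
  have u3: "C3_on W (\<lambda>(a, b). u a b)" using u unfolding W_def .
  have u2: "C2_on W (\<lambda>(a, b). u a b)" by (rule C3_on_imp_C2_on[OF u3])
  have P: "C2_on U (\<lambda>y. (R y, S y))" "(\<lambda>y. (R y, S y)) ` U \<subseteq> W"
    using C2_on_Pair[OF R S] R_pos unfolding W_def by auto
  have d: "(\<lambda>(a, b). u a b) differentiable (at (R y, S y))" if "y \<in> U" for y
    using C1_on_differentiable[OF C2_on_imp_C1_on[OF u2]] P(2) that by auto
  show "C2_on U (\<lambda>y. u (R y) (S y))"
    using C2_on_compose[OF U u2 P] by simp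
  show "C2_on U (\<lambda>y. u_rho u (R y) (S y))"
    using C2_on_compose[OF U C3_on_partial_derivative[OF W u3, where b="(1, 0)"] P]
    by (rule C2_on_cong[OF U, rotated]) (simp add: internal_energy_has_derivative(1)[OF d])
  show "C2_on U (temp u R S)"
    using C2_on_compose[OF U C3_on_partial_derivative[OF W u3, where b="(0, 1)"] P]
    by (rule C2_on_cong[OF U, rotated]) (simp add: temp_def internal_energy_has_derivative(2)[OF d])
qed

lemma C2_on_imp_C1_on_pd:
  assumes U: "open U" and f: "C2_on U f"
  shows "C1_on U (pd i f)"
  using f unfolding C2_on_iff_partial_derivatives[OF U] pd_def[abs_def] by auto

lemma eff_rho_eq:
  "R x > 0 \<Longrightarrow> eff_rho u R V S x = (1/2) * (V x \<bullet> V x) + u (R x) (S x) + R x * u_rho u (R x) (S x)"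
  unfolding eff_rho_def enth_def pres_def by (simp add: power2_eq_square)

lemma state_fields_C1_on:
  fixes R S :: "real^3 \<Rightarrow> real" and V :: "real^3 \<Rightarrow> real^3" and u :: "real \<Rightarrow> real \<Rightarrow> real"
  assumes U: "open U" and R: "C2_on U R" and S: "C2_on U S" and V: "C2_on U V"
    and R_pos: "\<And>y. y \<in> U \<Longrightarrow> R y > 0" and T_pos: "\<And>y. y \<in> U \<Longrightarrow> temp u R S y > 0"
    and u: "C3_on ({0<..} \<times> UNIV) (\<lambda>(a, b). u a b)"
  shows "C1_on U (eff_rho u R V S)" and "C1_on U (eff_v R V)" and "C1_on U (temp u R S)"
    and "C1_on U (\<lambda>y. visc \<mu> \<kappa> V y $ i $ j)" and "C1_on U (entflux K (temp u R S))"
proof -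
  note thermo = thermodynamic_fields_C2_on[OF U R S R_pos u]
  have R1: "C1_on U R" and V1: "C1_on U V" using R V by (simp_all add: C2_on_imp_C1_on)
  have "C1_on U (\<lambda>y. (1/2) * (V y \<bullet> V y) + u (R y) (S y) + R y * u_rho u (R y) (S y))"
    by (intro C1_on_add C1_on_cmult C1_on_bilinear[OF bounded_bilinear_inner U V1 V1]
        C1_on_bilinear[OF bounded_bilinear_mult U R1] thermo[THEN C2_on_imp_C1_on])
  then show "C1_on U (eff_rho u R V S)"
    by (rule C1_on_cong[OF U, rotated]) (simp add: eff_rho_eq R_pos)
  show "C1_on U (eff_v R V)"
    unfolding eff_v_def[abs_def] by (rule C1_on_bilinear[OF bounded_bilinear_scaleR U R1 V1])
  show T1: "C1_on U (temp u R S)" by (rule C2_on_imp_C1_on[OF thermo(3)])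
  have Grad: "C1_on U (\<lambda>y. Grad V y $ i $ j)" for i j
    unfolding Grad_def using C2_on_imp_C1_on_pd[OF U C2_on_vec_nth[OF V]] by simp
  have divg: "C1_on U (divg V)"
    unfolding divg_def[abs_def] by (intro C1_on_sum C2_on_imp_C1_on_pd[OF U C2_on_vec_nth[OF V]]) simp
  have "C1_on U (\<lambda>y. - (\<mu> * (Grad V y $ i $ j + Grad V y $ j $ i - (2/3 * divg V y) * mat 1 $ i $ j))
                   - (\<kappa> * divg V y) * mat 1 $ i $ j)"
    by (intro C1_on_diff C1_on_minus C1_on_cmult C1_on_add Grad
        C1_on_linear[OF bounded_linear_mult_left] divg)
  then show "C1_on U (\<lambda>y. visc \<mu> \<kappa> V y $ i $ j)"
    by (rule C1_on_cong[OF U, rotated]) (simp add: visc_def transpose_def)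
  have "C1_on U (grad (temp u R S))"
    unfolding grad_def[abs_def] by (intro C1_on_vec_lambda C2_on_imp_C1_on_pd[OF U thermo(3)])
  then have "C1_on U (\<lambda>y. - ((1 / temp u R S y) *\<^sub>R (K *v grad (temp u R S) y)))"
    by (intro C1_on_minus C1_on_bilinear[OF bounded_bilinear_scaleR U] C1_on_inverse[OF T1 T_pos]
        C1_on_linear[OF matrix_vector_mul_bounded_linear])
  then show "C1_on U (entflux K (temp u R S))" unfolding entflux_def[abs_def] .
qed

section \<open>The interconnection operator applied to the efforts\<close>

lemma J_op_efforts:
  assumes U: "open U" and x: "x \<in> U"
    and pos: "\<And>y. y \<in> U \<Longrightarrow> 0 < R y \<and> 0 < temp u R S y"
  shows "J_op u \<mu> \<kappa> K R V S (eff_rho u R V S) (eff_v R V) (eff_s u R S) x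
       = (rhs_rho R V x, rhs_v u \<mu> \<kappa> R V S x, rhs_s u \<mu> \<kappa> K R V S x)"
proof -
  define T where "T = temp u R S"
  define \<tau> where "\<tau> = visc \<mu> \<kappa> V"
  have Rx: "R x > 0" and Tx: "T x > 0" using pos x unfolding T_def by auto
  have e_s: "eff_s u R S y / R y = T y" "eff_s u R S y / (R y * T y) = 1" if "y \<in> U" for y
    using pos[OF that] unfolding eff_s_def T_def by simp_all
  have e_v: "(1 / R y) *\<^sub>R eff_v R V y = V y" if "y \<in> U" for y
    using pos[OF that] unfolding eff_v_def by simp
  have grad_T: "grad (\<lambda>z. eff_s u R S z / R z) y = grad T y" if "y \<in> U" for y
    by (rule grad_eq_on_open[OF U that]) (simp add: e_s)
  have Divt_e_s: "Divt (\<lambda>y. (eff_s u R S y / (R y * T y)) *\<^sub>R \<tau> y) x = Divt \<tau> x"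
    by (rule Divt_eq_on_open[OF U x]) (simp add: e_s)
  have Grad_e_v: "Grad (\<lambda>y. (1 / R y) *\<^sub>R eff_v R V y) x = Grad V x"
    by (rule Grad_eq_on_open[OF U x]) (simp add: e_v)
  have divg_e_s: "divg (\<lambda>y. S_T K T y *v G_T R (eff_s u R S) y) x = divg (entflux K T) x"
    by (rule divg_eq_on_open[OF U x])
       (simp add: S_T_def G_T_def entflux_def grad_T scaleR_matrix_vector_assoc matrix_vector_mult_uminus_right)
  have gyro_e_v: "(1 / R x) *\<^sub>R (gyro w *v eff_v R V x) = gyro w *v V x" for w
    using Rx unfolding eff_v_def by (simp add: matrix_vector_mult_scaleR)
  show ?thesis
    unfolding J_op_def Let_def T_def[symmetric] \<tau>_def[symmetric]
  proof (intro prod_eqI conjI; simp only: fst_conv snd_conv)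
    show "- divg (eff_v R V) x = rhs_rho R V x"
      unfolding rhs_rho_def eff_v_def by simp
    show "- grad (eff_rho u R V S) x - (1 / R x) *\<^sub>R (gyro (curl V x) *v eff_v R V x)
        + J_tau R S \<tau> T (eff_s u R S) x = rhs_v u \<mu> \<kappa> R V S x"
      unfolding rhs_v_def J_tau_def Divt_e_s gyro_e_v T_def[symmetric] \<tau>_def[symmetric]
      using Rx Tx by (simp add: eff_s_def eff_rho_def[abs_def] T_def)
    show "- J_tau_adj R S \<tau> T (eff_v R V) x + Q_T K R T (eff_s u R S) x
        - G_T_adj R (\<lambda>y. S_T K T y *v G_T R (eff_s u R S) y) x = rhs_s u \<mu> \<kappa> K R V S x"
      unfolding rhs_s_def J_tau_adj_def Q_T_def G_T_adj_def Grad_e_v divg_e_s grad_T[OF x] Let_def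
        T_def[symmetric] \<tau>_def[symmetric]
      using Rx Tx
      by (simp add: wnorm2_eq S_T_def entflux_def eff_v_def inner_commute algebra_simps
          scaleR_matrix_vector_assoc[symmetric])
  qed
qed

section \<open>Energy balance\<close>

definition energy_density :: "(real \<Rightarrow> real \<Rightarrow> real) \<Rightarrow>
    (real^3 \<Rightarrow> real) \<Rightarrow> (real^3 \<Rightarrow> real^3) \<Rightarrow> (real^3 \<Rightarrow> real) \<Rightarrow> real^3 \<Rightarrow> real" where
  "energy_density u R V S x = (1/2) * R x * (V x \<bullet> V x) + R x * u (R x) (S x)"

definition effort_pairing :: "(real \<Rightarrow> real \<Rightarrow> real) \<Rightarrow>
    (real^3 \<Rightarrow> real) \<Rightarrow> (real^3 \<Rightarrow> real^3) \<Rightarrow> (real^3 \<Rightarrow> real) \<Rightarrow>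
    (real^3 \<Rightarrow> real) \<Rightarrow> (real^3 \<Rightarrow> real^3) \<Rightarrow> (real^3 \<Rightarrow> real) \<Rightarrow> real^3 \<Rightarrow> real" where
  "effort_pairing u R V S f\<^sub>\<rho> f\<^sub>v f\<^sub>s x =
     eff_rho u R V S x * f\<^sub>\<rho> x + eff_v R V x \<bullet> f\<^sub>v x + eff_s u R S x * f\<^sub>s x"

definition energy_flux :: "(real \<Rightarrow> real \<Rightarrow> real) \<Rightarrow> real \<Rightarrow> real \<Rightarrow> real^3^3 \<Rightarrow>
    (real^3 \<Rightarrow> real) \<Rightarrow> (real^3 \<Rightarrow> real^3) \<Rightarrow> (real^3 \<Rightarrow> real) \<Rightarrow> real^3 \<Rightarrow> real^3" where
  "energy_flux u \<mu> \<kappa> K R V S y =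
     eff_rho u R V S y *\<^sub>R eff_v R V y + V y v* visc \<mu> \<kappa> V y
     + temp u R S y *\<^sub>R entflux K (temp u R S) y"

lemma energy_flux_inner:
  "energy_flux u \<mu> \<kappa> K R V S y \<bullet> a
     = eff_rho u R V S y * (eff_v R V y \<bullet> a) + ddot (visc \<mu> \<kappa> V y) (outer (V y) a)
       + temp u R S y * (entflux K (temp u R S) y \<bullet> a)"
  unfolding energy_flux_def by (simp add: ddot_outer inner_add_left)

lemma bnd_pairing_uminus_flows:
  "bnd_pairing \<sigma> e1 E2 e3 (\<lambda>x. - f1 x) (\<lambda>x. - F2 x) (\<lambda>x. - f3 x)
     = - (\<integral>x. e1 x * f1 x + ddot (E2 x) (F2 x) + e3 x * f3 x \<partial>\<sigma>)"
proof -
  have "e1 x * - f1 x + ddot (E2 x) (- F2 x) + e3 x * - f3 x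
      = - (e1 x * f1 x + ddot (E2 x) (F2 x) + e3 x * f3 x)" for x
    by (simp add: ddot_uminus_right)
  then show ?thesis unfolding bnd_pairing_def by (simp only: integral_minus)
qed

lemma eff_v_inner_rhs_v:
  assumes "R x > 0"
  shows "eff_v R V x \<bullet> rhs_v u \<mu> \<kappa> R V S x
       = - (grad (eff_rho u R V S) x \<bullet> eff_v R V x) + R x * temp u R S x * (V x \<bullet> grad S x)
         - V x \<bullet> Divt (visc \<mu> \<kappa> V) x"
proof -
  have rhs: "rhs_v u \<mu> \<kappa> R V S x = - grad (eff_rho u R V S) x - gyro (curl V x) *v V x
      + temp u R S x *\<^sub>R grad S x - (1 / R x) *\<^sub>R Divt (visc \<mu> \<kappa> V) x"
    unfolding rhs_v_def eff_rho_def[abs_def] ..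
  show ?thesis
    using assms unfolding rhs eff_v_def by (simp add: inner_gyro_self algebra_simps inner_commute)
qed

lemma eff_s_mult_rhs_s:
  assumes "R x > 0" and "temp u R S x > 0"
  shows "eff_s u R S x * rhs_s u \<mu> \<kappa> K R V S x
       = - (R x * temp u R S x * (V x \<bullet> grad S x)) - ddot (visc \<mu> \<kappa> V x) (Grad V x)
         - entflux K (temp u R S) x \<bullet> grad (temp u R S) x
         - temp u R S x * divg (entflux K (temp u R S)) x"
  using assms unfolding rhs_s_def Let_def eff_s_def by (simp add: ddot_scaleR_left algebra_simps)

context
  fixes R S :: "real^3 \<Rightarrow> real" and V :: "real^3 \<Rightarrow> real^3" and u :: "real \<Rightarrow> real \<Rightarrow> real"
    and U :: "(real^3) set"
  assumes U: "open U" and R: "C2_on U R" and S: "C2_on U S" and V: "C2_on U V"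
    and R_pos: "\<And>y. y \<in> U \<Longrightarrow> R y > 0" and T_pos: "\<And>y. y \<in> U \<Longrightarrow> temp u R S y > 0"
    and u: "C3_on ({0<..} \<times> UNIV) (\<lambda>(a, b). u a b)"
begin

lemma energy_flux_terms_C1_on:
  shows "C1_on U (\<lambda>y. eff_rho u R V S y *\<^sub>R eff_v R V y)"
    and "C1_on U (\<lambda>y. V y v* visc \<mu> \<kappa> V y)"
    and "C1_on U (\<lambda>y. temp u R S y *\<^sub>R entflux K (temp u R S) y)"
  unfolding vector_matrix_mult_def
  using state_fields_C1_on[OF U R S V R_pos T_pos u] C1_on_vec_nth[OF C2_on_imp_C1_on[OF V]]
  by (auto intro!: C1_on_bilinear[OF bounded_bilinear_scaleR U] C1_on_vec_lambda C1_on_sum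
      C1_on_bilinear[OF bounded_bilinear_mult U])

lemma energy_flux_C1_on: "C1_on U (energy_flux u \<mu> \<kappa> K R V S)"
  unfolding energy_flux_def[abs_def] by (intro C1_on_add energy_flux_terms_C1_on)

lemma power_balance:
  assumes x: "x \<in> U"
  shows "effort_pairing u R V S (rhs_rho R V) (rhs_v u \<mu> \<kappa> R V S) (rhs_s u \<mu> \<kappa> K R V S) x
       = - divg (energy_flux u \<mu> \<kappa> K R V S) x"
proof -
  define a where "a = eff_rho u R V S"
  define w where "w = eff_v R V"
  define T where "T = temp u R S"
  define \<tau> where "\<tau> = visc \<mu> \<kappa> V"
  define q where "q = entflux K T"
  have "a differentiable (at x)" "w differentiable (at x)" "T differentiable (at x)"
      "q differentiable (at x)" "V differentiable (at x)" "\<And>i j. (\<lambda>y. \<tau> y $ i $ j) differentiable (at x)"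
    "(\<lambda>y. a y *\<^sub>R w y) differentiable (at x)" "(\<lambda>y. V y v* \<tau> y) differentiable (at x)"
    "(\<lambda>y. T y *\<^sub>R q y) differentiable (at x)"
    unfolding a_def w_def T_def \<tau>_def q_def
    by (auto intro!: C1_on_differentiable[OF _ x] state_fields_C1_on[OF U R S V R_pos T_pos u]
        C2_on_imp_C1_on[OF V] energy_flux_terms_C1_on)
  then have "divg (energy_flux u \<mu> \<kappa> K R V S) x
      = a x * divg w x + grad a x \<bullet> w x + (V x \<bullet> Divt \<tau> x + ddot (\<tau> x) (Grad V x))
        + (T x * divg q x + grad T x \<bullet> q x)"
    unfolding energy_flux_def[abs_def] a_def[symmetric] w_def[symmetric] T_def[symmetric]
      \<tau>_def[symmetric] q_def[symmetric]
    by (simp add: divg_add differentiable_add divg_scaleR divg_vector_matrix_mult)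
  moreover have "a x * rhs_rho R V x = - (a x * divg w x)"
    unfolding rhs_rho_def w_def eff_v_def[abs_def] by simp
  moreover note eff_v_inner_rhs_v[of R x V u \<mu> \<kappa> S] eff_s_mult_rhs_s[of R x u S \<mu> \<kappa> K V]
  ultimately show ?thesis
    using R_pos[OF x] T_pos[OF x]
    unfolding effort_pairing_def a_def[symmetric] w_def[symmetric] T_def[symmetric]
      \<tau>_def[symmetric] q_def[symmetric]
    by (simp add: inner_commute algebra_simps)
qed

lemma integral_power_balance:
  assumes \<Omega>: "\<Omega> \<subseteq> U"
    and gauss: "\<And>F. C1_on U F \<Longrightarrow> integral \<Omega> (divg F) = (\<integral>x. F x \<bullet> n x \<partial>\<sigma>)"
  shows "integral \<Omega> (effort_pairing u R V S (rhs_rho R V) (rhs_v u \<mu> \<kappa> R V S) (rhs_s u \<mu> \<kappa> K R V S))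
       = - (\<integral>x. energy_flux u \<mu> \<kappa> K R V S x \<bullet> n x \<partial>\<sigma>)"
proof -
  have "integral \<Omega> (effort_pairing u R V S (rhs_rho R V) (rhs_v u \<mu> \<kappa> R V S) (rhs_s u \<mu> \<kappa> K R V S))
      = integral \<Omega> (\<lambda>x. - divg (energy_flux u \<mu> \<kappa> K R V S) x)"
    using power_balance \<Omega> by (intro integral_cong) auto
  also have "\<dots> = - (\<integral>x. energy_flux u \<mu> \<kappa> K R V S x \<bullet> n x \<partial>\<sigma>)"
    using gauss[OF energy_flux_C1_on] by simp
  finally show ?thesis .
qed

end

section \<open>Time derivative of the Hamiltonian\<close>

lemma linearization_bound_real:
  fixes g g' :: "real \<Rightarrow> real"
  assumes "\<And>y. y \<in> closed_segment x0 x \<Longrightarrow> (g has_real_derivative g' y) (at y)"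
    and "\<And>y. y \<in> closed_segment x0 x \<Longrightarrow> \<bar>g' y - g' x0\<bar> \<le> e"
  shows "\<bar>g x - g x0 - (x - x0) * g' x0\<bar> \<le> e * \<bar>x - x0\<bar>"
proof -
  have "((\<lambda>y. g y - g' x0 * y) has_real_derivative g' y - g' x0) (at y within closed_segment x0 x)"
    if "y \<in> closed_segment x0 x" for y
    by (rule has_field_derivative_at_within[OF DERIV_diff[OF assms(1)[OF that] DERIV_cmult_Id]])
  then have "norm ((\<lambda>y. g y - g' x0 * y) x - (\<lambda>y. g y - g' x0 * y) x0) \<le> e * norm (x - x0)"
    using assms(2) by (intro field_differentiable_bound[OF convex_closed_segment]) auto
  then show ?thesis by (simp add: algebra_simps)
qed

lemma continuous_on_imp_integrable_on_lmeasurable: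
  fixes g :: "'a::euclidean_space \<Rightarrow> real"
  assumes S: "S \<in> lmeasurable" and K: "compact K" "S \<subseteq> K" and g: "continuous_on K g"
  shows "g integrable_on S"
proof -
  obtain B where B: "\<And>x. x \<in> K \<Longrightarrow> norm (g x) \<le> B"
    using compact_imp_bounded[OF compact_continuous_image[OF g K(1)]] unfolding bounded_iff by auto
  have "g \<in> borel_measurable (lebesgue_on S)"
    by (rule continuous_imp_measurable_on_sets_lebesgue[OF continuous_on_subset[OF g K(2)]])
       (use S in auto)
  then show ?thesis
    by (rule measurable_bounded_by_integrable_imp_integrable_real[OF _ integrable_on_const[OF S, of B]])
       (use B K S in auto)
qed

lemma continuous_on_prod_compact_ball:
  fixes f :: "real \<Rightarrow> 'a::topological_space \<Rightarrow> real"
  assumes f: "continuous_on (X \<times> K) (\<lambda>(x, t). f x t)" and K: "compact K"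
    and X: "open X" "x0 \<in> X" and e: "e > 0"
  obtains r where "r > 0" "ball x0 r \<subseteq> X"
    and "\<And>x t. x \<in> ball x0 r \<Longrightarrow> t \<in> K \<Longrightarrow> \<bar>f x t - f x0 t\<bar> \<le> e"
proof -
  obtain X0 where X0: "x0 \<in> X0" "open X0"
      "\<forall>x\<in>X0 \<inter> X. \<forall>t\<in>K. dist ((\<lambda>(x, t). f x t) (x, t)) ((\<lambda>(x, t). f x t) (x0, t)) \<le> e"
    using continuous_on_prod_compactE[OF f K X(2) e] by blast
  obtain r where r: "r > 0" "ball x0 r \<subseteq> X0 \<inter> X"
    using X X0 by (meson Int_iff open_Int open_contains_ball)
  show ?thesis
  proof
    show "r > 0" "ball x0 r \<subseteq> X" using r by auto
    fix x t assume "x \<in> ball x0 r" and t: "t \<in> K"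
    with r(2) have "x \<in> X0 \<inter> X" by blast
    from bspec[OF bspec[OF X0(3) this] t] show "\<bar>f x t - f x0 t\<bar> \<le> e"
      by (simp add: dist_real_def)
  qed
qed

lemma integral_linearization_bound:
  fixes f :: "real \<Rightarrow> 'a::euclidean_space \<Rightarrow> real"
  assumes S: "S \<in> lmeasurable"
    and int: "f x integrable_on S" "f x0 integrable_on S" "g integrable_on S"
    and bound: "\<And>t. t \<in> S \<Longrightarrow> \<bar>f x t - f x0 t - (x - x0) * g t\<bar> \<le> e * \<bar>x - x0\<bar>"
  shows "\<bar>integral S (f x) - integral S (f x0) - integral S g * (x - x0)\<bar>
      \<le> e * measure lebesgue S * \<bar>x - x0\<bar>"
proof -
  have "integral S (f x) - integral S (f x0) - integral S g * (x - x0)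
      = integral S (\<lambda>t. f x t - f x0 t - (x - x0) * g t)"
    using int by (simp add: integral_diff integrable_diff integrable_on_mult_right mult.commute[of _ "x - x0"])
  also have "\<bar>\<dots>\<bar> \<le> integral S (\<lambda>t. e * \<bar>x - x0\<bar>)"
    using int bound
    by (intro integral_norm_bound_integral[where f="\<lambda>t. f x t - f x0 t - (x - x0) * g t", simplified])
       (auto intro!: integrable_diff integrable_on_const[OF S] integrable_on_mult_right)
  also have "\<dots> = e * measure lebesgue S * \<bar>x - x0\<bar>"
    using integral_mult_right[of S "e * \<bar>x - x0\<bar>" "\<lambda>t. 1"] lmeasure_integral[OF S]
    by (simp add: ac_simps)
  finally show ?thesis .
qed

lemma leibniz_rule_lmeasurable:
  fixes f f' :: "real \<Rightarrow> 'a::euclidean_space \<Rightarrow> real"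
  assumes X: "open X" "convex X" "x0 \<in> X"
    and K: "compact K" "S \<subseteq> K" and S: "S \<in> lmeasurable"
    and f': "\<And>x t. x \<in> X \<Longrightarrow> t \<in> S \<Longrightarrow> ((\<lambda>x. f x t) has_real_derivative f' x t) (at x)"
    and f: "\<And>x. x \<in> X \<Longrightarrow> f x integrable_on S"
    and f'_cont: "continuous_on (X \<times> K) (\<lambda>(x, t). f' x t)"
  shows "((\<lambda>x. integral S (f x)) has_real_derivative integral S (f' x0)) (at x0)"
  unfolding has_field_derivative_def
proof (rule has_derivativeI[OF bounded_linear_mult_right], rule tendstoI)
  fix e' :: real assume "e' > 0"
  have "continuous_on K (\<lambda>t. (\<lambda>(x, t). f' x t) (x0, t))"
    by (rule continuous_on_compose2[OF f'_cont]) (use X(3) in \<open>auto intro!: continuous_intros\<close>)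
  then have f'_int: "f' x0 integrable_on S"
    by (intro continuous_on_imp_integrable_on_lmeasurable[OF S K]) simp
  define m where "m = measure lebesgue S"
  define e where "e = e' / (m + 1)"
  have "m \<ge> 0" unfolding m_def by simp
  with \<open>e' > 0\<close> have e: "e > 0" and em: "e * m < e'"
    unfolding e_def by (auto simp: field_simps)
  obtain r where r: "r > 0" "ball x0 r \<subseteq> X"
    and f'_close: "\<And>x t. x \<in> ball x0 r \<Longrightarrow> t \<in> K \<Longrightarrow> \<bar>f' x t - f' x0 t\<bar> \<le> e"
    using continuous_on_prod_compact_ball[OF f'_cont K(1) X(1,3) e] by blast
  have "\<forall>\<^sub>F x in at x0. x \<in> ball x0 r \<and> x \<noteq> x0"
    using r unfolding eventually_at by (intro exI[of _ r]) (auto simp: dist_commute)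
  then show "\<forall>\<^sub>F x in at x0 within UNIV.
      dist ((integral S (f x) - integral S (f x0) - integral S (f' x0) * (x - x0)) /\<^sub>R norm (x - x0)) 0 < e'"
  proof (rule eventually_mono)
    fix x assume x: "x \<in> ball x0 r \<and> x \<noteq> x0"
    have "closed_segment x0 x \<subseteq> ball x0 r"
      using x r by (intro closed_segment_subset) auto
    then have "closed_segment x0 x \<subseteq> ball x0 r \<inter> X" and xX: "x \<in> X"
      using r x by auto
    then have "\<bar>f x t - f x0 t - (x - x0) * f' x0 t\<bar> \<le> e * \<bar>x - x0\<bar>" if "t \<in> S" for t
      using that K(2) by (intro linearization_bound_real f' f'_close) auto
    then have "\<bar>integral S (f x) - integral S (f x0) - integral S (f' x0) * (x - x0)\<bar> \<le> e * m * \<bar>x - x0\<bar>"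
      unfolding m_def by (intro integral_linearization_bound[OF S f[OF xX] f[OF X(3)] f'_int])
    also have "\<dots> < e' * \<bar>x - x0\<bar>"
      using em x by simp
    finally show "dist ((integral S (f x) - integral S (f x0) - integral S (f' x0) * (x - x0))
        /\<^sub>R norm (x - x0)) 0 < e'"
      using x by (simp add: dist_real_def divide_simps abs_mult)
  qed
qed

lemma energy_density_has_real_derivative:
  fixes r s :: "real \<Rightarrow> real" and v :: "real \<Rightarrow> real^3" and u :: "real \<Rightarrow> real \<Rightarrow> real"
  assumes r: "(r has_real_derivative r') (at t)" and s: "(s has_real_derivative s') (at t)"
    and v: "(v has_vector_derivative v') (at t)"
    and u: "(\<lambda>(a, b). u a b) differentiable (at (r t, s t))"
  shows "((\<lambda>t. (1/2) * r t * (v t \<bullet> v t) + r t * u (r t) (s t)) has_real_derivative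
          ((1/2) * (v t \<bullet> v t) + u (r t) (s t) + r t * u_rho u (r t) (s t)) * r'
          + (r t *\<^sub>R v t) \<bullet> v' + r t * u_s u (r t) (s t) * s') (at t)"
proof -
  have "((\<lambda>t. v t \<bullet> v t) has_derivative (\<lambda>h. v t \<bullet> (h *\<^sub>R v') + (h *\<^sub>R v') \<bullet> v t)) (at t)"
    using has_derivative_inner[OF v[unfolded has_vector_derivative_def] v[unfolded has_vector_derivative_def]] .
  moreover have "(\<lambda>h. v t \<bullet> (h *\<^sub>R v') + (h *\<^sub>R v') \<bullet> v t) = (*) (2 * (v t \<bullet> v'))"
    by (rule ext) (simp add: inner_commute algebra_simps)
  ultimately have vv: "((\<lambda>t. v t \<bullet> v t) has_real_derivative 2 * (v t \<bullet> v')) (at t)"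
    unfolding has_field_derivative_def by simp
  have "(((\<lambda>(a, b). u a b) \<circ> (\<lambda>t. (r t, s t))) has_derivative
      ((\<lambda>(h, k). h * u_rho u (r t) (s t) + k * u_s u (r t) (s t)) \<circ> (\<lambda>h. (r' * h, s' * h)))) (at t)"
    using diff_chain_at[OF has_derivative_Pair[OF r[unfolded has_field_derivative_def]
          s[unfolded has_field_derivative_def]] internal_energy_has_derivative(3)[OF u]] .
  moreover have "((\<lambda>(h, k). h * u_rho u (r t) (s t) + k * u_s u (r t) (s t)) \<circ> (\<lambda>h. (r' * h, s' * h)))
      = (*) (r' * u_rho u (r t) (s t) + s' * u_s u (r t) (s t))"
    by (rule ext) (simp add: algebra_simps)
  ultimately have "((\<lambda>t. u (r t) (s t)) has_real_derivative
      r' * u_rho u (r t) (s t) + s' * u_s u (r t) (s t)) (at t)"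
    unfolding has_field_derivative_def by (simp add: o_def)
  from DERIV_add[OF DERIV_mult'[OF DERIV_cmult[OF r, of "1/2"] vv] DERIV_mult'[OF r this]]
  show ?thesis by (rule DERIV_cong) (simp add: algebra_simps)
qed

lemma efforts_continuous_on:
  fixes \<rho> s :: "real \<Rightarrow> real^3 \<Rightarrow> real" and v :: "real \<Rightarrow> real^3 \<Rightarrow> real^3"
    and u :: "real \<Rightarrow> real \<Rightarrow> real"
  assumes u: "C1_on ({0<..} \<times> UNIV) (\<lambda>(a, b). u a b)"
    and \<rho>: "continuous_on A (\<lambda>(t, x). \<rho> t x)" and v: "continuous_on A (\<lambda>(t, x). v t x)"
    and s: "continuous_on A (\<lambda>(t, x). s t x)"
    and pos: "\<And>t x. (t, x) \<in> A \<Longrightarrow> 0 < \<rho> t x"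
  shows "continuous_on A (\<lambda>(t, x). eff_rho u (\<rho> t) (v t) (s t) x)"
    and "continuous_on A (\<lambda>(t, x). eff_v (\<rho> t) (v t) x)"
    and "continuous_on A (\<lambda>(t, x). eff_s u (\<rho> t) (s t) x)"
proof -
  define W :: "(real \<times> real) set" where "W = {0<..} \<times> UNIV"
  have W: "open W" unfolding W_def by (intro open_Times) auto
  note u_rho_s = internal_energy_partials_continuous_on[OF W u[folded W_def]]
  have P: "continuous_on A (\<lambda>(t, x). (\<rho> t x, s t x))" "(\<lambda>(t, x). (\<rho> t x, s t x)) ` A \<subseteq> W"
    using continuous_on_Pair[OF \<rho> s] pos unfolding W_def by (auto simp: split_beta)
  have "continuous_on A (\<lambda>p. (\<lambda>(a, b). u a b) ((\<lambda>(t, x). (\<rho> t x, s t x)) p))"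
    "continuous_on A (\<lambda>p. (\<lambda>(a, b). u_rho u a b) ((\<lambda>(t, x). (\<rho> t x, s t x)) p))"
    "continuous_on A (\<lambda>p. (\<lambda>(a, b). u_s u a b) ((\<lambda>(t, x). (\<rho> t x, s t x)) p))"
    using continuous_on_compose2[OF _ P(1) P(2)] u_rho_s C1_on_imp_continuous_on[OF u[folded W_def]]
    by blast+
  then have c: "continuous_on A (\<lambda>(t, x). u (\<rho> t x) (s t x))"
    "continuous_on A (\<lambda>(t, x). u_rho u (\<rho> t x) (s t x))"
    "continuous_on A (\<lambda>(t, x). u_s u (\<rho> t x) (s t x))"
    by (simp_all add: split_beta)
  have "continuous_on A (\<lambda>(t, x). (1/2) * (v t x \<bullet> v t x) + u (\<rho> t x) (s t x)
      + \<rho> t x * u_rho u (\<rho> t x) (s t x))"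
    using \<rho> v c by (auto simp: split_beta intro!: continuous_intros)
  then show "continuous_on A (\<lambda>(t, x). eff_rho u (\<rho> t) (v t) (s t) x)"
    by (rule continuous_on_eq) (auto simp: eff_rho_eq pos)
  show "continuous_on A (\<lambda>(t, x). eff_v (\<rho> t) (v t) x)"
    using \<rho> v unfolding eff_v_def by (auto simp: split_beta intro!: continuous_intros)
  show "continuous_on A (\<lambda>(t, x). eff_s u (\<rho> t) (s t) x)"
    using \<rho> c(3) unfolding eff_s_def temp_def by (auto simp: split_beta intro!: continuous_intros)
qed

lemma energy_density_time_derivative:
  fixes \<rho> s :: "real \<Rightarrow> real^3 \<Rightarrow> real" and v :: "real \<Rightarrow> real^3 \<Rightarrow> real^3"
    and u :: "real \<Rightarrow> real \<Rightarrow> real"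
  assumes u: "C1_on ({0<..} \<times> UNIV) (\<lambda>(a, b). u a b)"
    and cont: "continuous_on A (\<lambda>(t, x). \<rho> t x)" "continuous_on A (\<lambda>(t, x). v t x)"
      "continuous_on A (\<lambda>(t, x). s t x)"
    and rates_cont: "continuous_on A \<rho>'" "continuous_on A v'" "continuous_on A s'"
    and rates: "\<And>t x. (t, x) \<in> A \<Longrightarrow> ((\<lambda>t. \<rho> t x) has_real_derivative \<rho>' (t, x)) (at t)"
      "\<And>t x. (t, x) \<in> A \<Longrightarrow> ((\<lambda>t. v t x) has_vector_derivative v' (t, x)) (at t)"
      "\<And>t x. (t, x) \<in> A \<Longrightarrow> ((\<lambda>t. s t x) has_real_derivative s' (t, x)) (at t)"
    and pos: "\<And>t x. (t, x) \<in> A \<Longrightarrow> 0 < \<rho> t x"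
  shows "continuous_on A (\<lambda>(t, x). energy_density u (\<rho> t) (v t) (s t) x)"
    and "continuous_on A (\<lambda>(t, x).
           effort_pairing u (\<rho> t) (v t) (s t) (\<lambda>x. \<rho>' (t, x)) (\<lambda>x. v' (t, x)) (\<lambda>x. s' (t, x)) x)"
    and "(t, x) \<in> A \<Longrightarrow> ((\<lambda>t. energy_density u (\<rho> t) (v t) (s t) x) has_real_derivative
           effort_pairing u (\<rho> t) (v t) (s t) (\<lambda>x. \<rho>' (t, x)) (\<lambda>x. v' (t, x)) (\<lambda>x. s' (t, x)) x) (at t)"
proof -
  have "continuous_on A (\<lambda>p. (\<lambda>(a, b). u a b) ((\<lambda>(t, x). (\<rho> t x, s t x)) p))"
    by (rule continuous_on_compose2[OF C1_on_imp_continuous_on[OF u]])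
       (use cont pos in \<open>auto simp: split_beta intro!: continuous_intros\<close>)
  then show "continuous_on A (\<lambda>(t, x). energy_density u (\<rho> t) (v t) (s t) x)"
    using cont unfolding energy_density_def by (auto simp: split_beta intro!: continuous_intros)
  show "continuous_on A (\<lambda>(t, x).
      effort_pairing u (\<rho> t) (v t) (s t) (\<lambda>x. \<rho>' (t, x)) (\<lambda>x. v' (t, x)) (\<lambda>x. s' (t, x)) x)"
    using efforts_continuous_on[OF u cont] pos rates_cont
    unfolding effort_pairing_def by (auto simp: split_beta intro!: continuous_intros)
  assume tx: "(t, x) \<in> A"
  have "(\<lambda>(a, b). u a b) differentiable (at (\<rho> t x, s t x))"
    using C1_on_differentiable[OF u] pos[OF tx] by simp
  from energy_density_has_real_derivative[OF rates(1)[OF tx] rates(3)[OF tx] rates(2)[OF tx] this]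
  show "((\<lambda>t. energy_density u (\<rho> t) (v t) (s t) x) has_real_derivative
      effort_pairing u (\<rho> t) (v t) (s t) (\<lambda>x. \<rho>' (t, x)) (\<lambda>x. v' (t, x)) (\<lambda>x. s' (t, x)) x) (at t)"
    unfolding energy_density_def effort_pairing_def using pos[OF tx]
    by (simp add: eff_rho_eq eff_v_def eff_s_def temp_def mult.assoc)
qed

lemma continuous_on_slice:
  assumes "continuous_on (A \<times> B) g" "t \<in> A" "C \<subseteq> B"
  shows "continuous_on C (\<lambda>x. g (t, x))"
  by (rule continuous_on_compose2[OF assms(1)]) (use assms(2,3) in \<open>auto intro!: continuous_intros\<close>)

lemma leibniz_rule_open_bounded:
  fixes h :: "real \<Rightarrow> 'a::euclidean_space \<Rightarrow> real"
  assumes \<Omega>: "open \<Omega>" "bounded \<Omega>" and U: "closure \<Omega> \<subseteq> U" and I: "open I" "t0 \<in> I"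
    and h: "continuous_on (I \<times> U) (\<lambda>(t, x). h t x)" and D: "continuous_on (I \<times> U) D"
    and h_deriv: "\<And>t x. t \<in> I \<Longrightarrow> x \<in> U \<Longrightarrow> ((\<lambda>t. h t x) has_real_derivative D (t, x)) (at t)"
  shows "((\<lambda>t. integral \<Omega> (h t)) has_real_derivative integral \<Omega> (\<lambda>x. D (t0, x))) (at t0)"
proof -
  obtain \<delta> where \<delta>: "\<delta> > 0" "ball t0 \<delta> \<subseteq> I" using I open_contains_ball by blast
  have h_slice: "continuous_on (closure \<Omega>) (h t)" if "t \<in> I" for t
    using continuous_on_slice[OF h that U] by simp
  show ?thesis
  proof (rule leibniz_rule_lmeasurable[where X="ball t0 \<delta>" and K="closure \<Omega>"])
    show \<Omega>_meas: "\<Omega> \<in> lmeasurable" by (rule lmeasurable_open[OF \<Omega>(2,1)])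
    show "h t integrable_on \<Omega>" if "t \<in> ball t0 \<delta>" for t
      using that \<delta> \<Omega>(2)
      by (intro continuous_on_imp_integrable_on_lmeasurable[OF \<Omega>_meas _ closure_subset h_slice]) auto
    show "((\<lambda>t. h t x) has_real_derivative D (t, x)) (at t)" if "t \<in> ball t0 \<delta>" "x \<in> \<Omega>" for t x
      using h_deriv that \<delta>(2) U closure_subset by blast
    show "continuous_on (ball t0 \<delta> \<times> closure \<Omega>) (\<lambda>(t, x). D (t, x))"
      using continuous_on_subset[OF D] \<delta> U by (simp add: Sigma_mono)
  qed (use \<delta> \<Omega> closure_subset in auto)
qed

lemma Ham_has_real_derivative:
  fixes \<Omega> U :: "(real^3) set" and I :: "real set"
    and \<rho> s :: "real \<Rightarrow> real^3 \<Rightarrow> real" and v :: "real \<Rightarrow> real^3 \<Rightarrow> real^3"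
    and u :: "real \<Rightarrow> real \<Rightarrow> real"
  assumes \<Omega>: "open \<Omega>" "bounded \<Omega>" and U: "open U" "closure \<Omega> \<subseteq> U" and I: "open I" "t0 \<in> I"
    and u: "C1_on ({0<..} \<times> UNIV) (\<lambda>(a, b). u a b)"
    and reg: "C1_on (I \<times> U) (\<lambda>(t, x). \<rho> t x)" "C1_on (I \<times> U) (\<lambda>(t, x). v t x)"
      "C1_on (I \<times> U) (\<lambda>(t, x). s t x)"
    and pos: "\<And>t x. t \<in> I \<Longrightarrow> x \<in> U \<Longrightarrow> 0 < \<rho> t x"
    and \<rho>\<^sub>t: "\<And>x. x \<in> \<Omega> \<Longrightarrow> ((\<lambda>t. \<rho> t x) has_real_derivative \<rho>\<^sub>t x) (at t0)"
    and v\<^sub>t: "\<And>x. x \<in> \<Omega> \<Longrightarrow> ((\<lambda>t. v t x) has_vector_derivative v\<^sub>t x) (at t0)"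
    and s\<^sub>t: "\<And>x. x \<in> \<Omega> \<Longrightarrow> ((\<lambda>t. s t x) has_real_derivative s\<^sub>t x) (at t0)"
  shows "((\<lambda>t. Ham \<Omega> u (\<rho> t) (v t) (s t)) has_real_derivative
           integral \<Omega> (effort_pairing u (\<rho> t0) (v t0) (s t0) \<rho>\<^sub>t v\<^sub>t s\<^sub>t)) (at t0)"
proof -
  obtain \<rho>' where \<rho>': "continuous_on (I \<times> U) \<rho>'"
      "\<And>t x. t \<in> I \<Longrightarrow> x \<in> U \<Longrightarrow> ((\<lambda>t. \<rho> t x) has_real_derivative \<rho>' (t, x)) (at t)"
    using C1_on_Times_partial_derivative[OF reg(1) I(1) U(1)]
    unfolding has_real_derivative_iff_has_vector_derivative by blast
  obtain v' where v': "continuous_on (I \<times> U) v'"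
      "\<And>t x. t \<in> I \<Longrightarrow> x \<in> U \<Longrightarrow> ((\<lambda>t. v t x) has_vector_derivative v' (t, x)) (at t)"
    using C1_on_Times_partial_derivative[OF reg(2) I(1) U(1)] by blast
  obtain s' where s': "continuous_on (I \<times> U) s'"
      "\<And>t x. t \<in> I \<Longrightarrow> x \<in> U \<Longrightarrow> ((\<lambda>t. s t x) has_real_derivative s' (t, x)) (at t)"
    using C1_on_Times_partial_derivative[OF reg(3) I(1) U(1)]
    unfolding has_real_derivative_iff_has_vector_derivative by blast
  note density = energy_density_time_derivative[OF u reg[THEN C1_on_imp_continuous_on] \<rho>'(1) v'(1) s'(1)]
  define D where "D = (\<lambda>(t, x).
      effort_pairing u (\<rho> t) (v t) (s t) (\<lambda>x. \<rho>' (t, x)) (\<lambda>x. v' (t, x)) (\<lambda>x. s' (t, x)) x)"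
  have "((\<lambda>t. integral \<Omega> (energy_density u (\<rho> t) (v t) (s t))) has_real_derivative
      integral \<Omega> (\<lambda>x. D (t0, x))) (at t0)"
  proof (rule leibniz_rule_open_bounded[OF \<Omega> U(2) I])
    show "continuous_on (I \<times> U) (\<lambda>(t, x). energy_density u (\<rho> t) (v t) (s t) x)"
      by (rule density(1)) (use \<rho>'(2) v'(2) s'(2) pos in auto)
    show "continuous_on (I \<times> U) D"
      unfolding D_def by (rule density(2)) (use \<rho>'(2) v'(2) s'(2) pos in auto)
    show "((\<lambda>t. energy_density u (\<rho> t) (v t) (s t) x) has_real_derivative D (t, x)) (at t)"
      if "t \<in> I" "x \<in> U" for t x
      unfolding D_def case_prod_conv by (rule density(3)) (use that \<rho>'(2) v'(2) s'(2) pos in auto)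
  qed
  moreover have "D (t0, x) = effort_pairing u (\<rho> t0) (v t0) (s t0) \<rho>\<^sub>t v\<^sub>t s\<^sub>t x" if "x \<in> \<Omega>" for x
  proof -
    have x: "x \<in> U" using that U(2) closure_subset by blast
    show ?thesis
      unfolding D_def effort_pairing_def using DERIV_unique[OF \<rho>'(2)[OF I(2) x] \<rho>\<^sub>t[OF that]]
        DERIV_unique[OF s'(2)[OF I(2) x] s\<^sub>t[OF that]]
        vector_derivative_unique_at[OF v'(2)[OF I(2) x] v\<^sub>t[OF that]] by simp
  qed
  ultimately show ?thesis
    unfolding Ham_def energy_density_def[abs_def] by (simp cong: integral_cong)
qed

lemma Ham_has_real_derivative_energy_flux:
  fixes \<Omega> U :: "(real^3) set" and I :: "real set"
    and \<rho> s :: "real \<Rightarrow> real^3 \<Rightarrow> real" and v :: "real \<Rightarrow> real^3 \<Rightarrow> real^3"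
    and u :: "real \<Rightarrow> real \<Rightarrow> real"
  assumes \<Omega>: "open \<Omega>" "bounded \<Omega>" and U: "open U" "closure \<Omega> \<subseteq> U" and I: "open I" "t \<in> I"
    and gauss: "\<And>F. C1_on U F \<Longrightarrow> integral \<Omega> (divg F) = (\<integral>x. F x \<bullet> n x \<partial>\<sigma>)"
    and u: "C3_on ({0<..} \<times> UNIV) (\<lambda>(a, b). u a b)"
    and reg: "C2_on (I \<times> U) (\<lambda>(t, x). \<rho> t x)" "C2_on (I \<times> U) (\<lambda>(t, x). v t x)"
      "C2_on (I \<times> U) (\<lambda>(t, x). s t x)"
    and pos: "\<And>t x. t \<in> I \<Longrightarrow> x \<in> U \<Longrightarrow> 0 < \<rho> t x \<and> 0 < temp u (\<rho> t) (s t) x"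
    and eq_\<rho>: "\<And>x. x \<in> \<Omega> \<Longrightarrow> ((\<lambda>t. \<rho> t x) has_real_derivative rhs_rho (\<rho> t) (v t) x) (at t)"
    and eq_v: "\<And>x. x \<in> \<Omega> \<Longrightarrow> ((\<lambda>t. v t x) has_vector_derivative rhs_v u \<mu> \<kappa> (\<rho> t) (v t) (s t) x) (at t)"
    and eq_s: "\<And>x. x \<in> \<Omega> \<Longrightarrow> ((\<lambda>t. s t x) has_real_derivative rhs_s u \<mu> \<kappa> K (\<rho> t) (v t) (s t) x) (at t)"
  shows "((\<lambda>t. Ham \<Omega> u (\<rho> t) (v t) (s t)) has_real_derivative
           - (\<integral>x. energy_flux u \<mu> \<kappa> K (\<rho> t) (v t) (s t) x \<bullet> n x \<partial>\<sigma>)) (at t)"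
proof -
  have "C2_on U (\<rho> t)" "C2_on U (v t)" "C2_on U (s t)"
    using C2_on_slice[OF U(1) reg(1) I(2)] C2_on_slice[OF U(1) reg(2) I(2)]
      C2_on_slice[OF U(1) reg(3) I(2)] by simp_all
  then have "integral \<Omega> (effort_pairing u (\<rho> t) (v t) (s t) (rhs_rho (\<rho> t) (v t))
        (rhs_v u \<mu> \<kappa> (\<rho> t) (v t) (s t)) (rhs_s u \<mu> \<kappa> K (\<rho> t) (v t) (s t)))
      = - (\<integral>x. energy_flux u \<mu> \<kappa> K (\<rho> t) (v t) (s t) x \<bullet> n x \<partial>\<sigma>)"
    using pos I(2) U(2) closure_subset[of \<Omega>] gauss u
    by (intro integral_power_balance[OF U(1)]) auto
  moreover have "((\<lambda>t. Ham \<Omega> u (\<rho> t) (v t) (s t)) has_real_derivative integral \<Omega>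
      (effort_pairing u (\<rho> t) (v t) (s t) (rhs_rho (\<rho> t) (v t)) (rhs_v u \<mu> \<kappa> (\<rho> t) (v t) (s t))
        (rhs_s u \<mu> \<kappa> K (\<rho> t) (v t) (s t)))) (at t)"
    using C3_on_imp_C2_on[THEN C2_on_imp_C1_on, OF u] reg[THEN C2_on_imp_C1_on] eq_\<rho> eq_v eq_s pos
    by (intro Ham_has_real_derivative[OF \<Omega> U I]) auto
  ultimately show ?thesis by simp
qed

theorem proposition1:
  fixes \<Omega> U :: "(real^3) set" and I :: "real set"
    and \<rho> s :: "real \<Rightarrow> real^3 \<Rightarrow> real" and v :: "real \<Rightarrow> real^3 \<Rightarrow> real^3"
    and u :: "real \<Rightarrow> real \<Rightarrow> real" and \<mu> \<kappa> :: real and K :: "real^3^3"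
    and \<sigma> :: "(real^3) measure" and n :: "real^3 \<Rightarrow> real^3"
  assumes dom: "open \<Omega>" "connected \<Omega>" "bounded \<Omega>"
    and nbhd: "open U" "closure \<Omega> \<subseteq> U"
    and times: "open I"
    and bdry: "space \<sigma> = frontier \<Omega>" "\<forall>x\<in>frontier \<Omega>. norm (n x) = 1"
    and gauss: "\<forall>F :: real^3 \<Rightarrow> real^3. C1_on U F \<longrightarrow>
                  (divg F integrable_on \<Omega> \<and> integrable \<sigma> (\<lambda>x. F x \<bullet> n x) \<and>
                   integral \<Omega> (divg F) = (\<integral>x. F x \<bullet> n x \<partial>\<sigma>))"
    and K_nonneg: "\<forall>a. 0 \<le> a \<bullet> (K *v a)"
    and u_reg: "C3_on ({0<..} \<times> UNIV) (\<lambda>(a, b). u a b)"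
    and reg: "C2_on (I \<times> U) (\<lambda>(t, x). \<rho> t x)" "C2_on (I \<times> U) (\<lambda>(t, x). v t x)"
             "C2_on (I \<times> U) (\<lambda>(t, x). s t x)"
    and pos: "\<forall>t\<in>I. \<forall>x\<in>U. 0 < \<rho> t x \<and> 0 < temp u (\<rho> t) (s t) x"
    and eq_rho: "\<forall>t\<in>I. \<forall>x\<in>\<Omega>. ((\<lambda>t. \<rho> t x) has_real_derivative rhs_rho (\<rho> t) (v t) x) (at t)"
    and eq_v: "\<forall>t\<in>I. \<forall>x\<in>\<Omega>.
                 ((\<lambda>t. v t x) has_vector_derivative rhs_v u \<mu> \<kappa> (\<rho> t) (v t) (s t) x) (at t)"
    and eq_s: "\<forall>t\<in>I. \<forall>x\<in>\<Omega>.
                 ((\<lambda>t. s t x) has_real_derivative rhs_s u \<mu> \<kappa> K (\<rho> t) (v t) (s t) x) (at t)"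
  shows "(\<forall>t\<in>I. \<forall>x\<in>\<Omega>.
            ((\<lambda>t. (\<rho> t x, v t x, s t x)) has_vector_derivative
               J_op u \<mu> \<kappa> K (\<rho> t) (v t) (s t)
                 (eff_rho u (\<rho> t) (v t) (s t)) (eff_v (\<rho> t) (v t)) (eff_s u (\<rho> t) (s t)) x) (at t))
       \<and> (\<forall>t\<in>I.
            let T = temp u (\<rho> t) (s t); \<tau> = visc \<mu> \<kappa> (v t); qs = entflux K T;
                e\<^sub>\<rho> = eff_rho u (\<rho> t) (v t) (s t); e\<^sub>v = eff_v (\<rho> t) (v t)
            in ((\<lambda>t. Ham \<Omega> u (\<rho> t) (v t) (s t)) has_real_derivative
                  bnd_pairing \<sigma> e\<^sub>\<rho> \<tau> T
                    (\<lambda>x. - (e\<^sub>v x \<bullet> n x)) (\<lambda>x. - outer (v t x) (n x)) (\<lambda>x. - (qs x \<bullet> n x))) (at t)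
             \<and> bnd_pairing \<sigma> e\<^sub>\<rho> \<tau> T
                 (\<lambda>x. - (e\<^sub>v x \<bullet> n x)) (\<lambda>x. - outer (v t x) (n x)) (\<lambda>x. - (qs x \<bullet> n x))
               = - (\<integral>x. e\<^sub>\<rho> x * (e\<^sub>v x \<bullet> n x) + ddot (\<tau> x) (outer (v t x) (n x))
                        + T x * (qs x \<bullet> n x) \<partial>\<sigma>))"
proof -
  have J: "J_op u \<mu> \<kappa> K (\<rho> t) (v t) (s t)
        (eff_rho u (\<rho> t) (v t) (s t)) (eff_v (\<rho> t) (v t)) (eff_s u (\<rho> t) (s t)) x
      = (rhs_rho (\<rho> t) (v t) x, rhs_v u \<mu> \<kappa> (\<rho> t) (v t) (s t) x, rhs_s u \<mu> \<kappa> K (\<rho> t) (v t) (s t) x)"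
    if "t \<in> I" "x \<in> \<Omega>" for t x
    using pos that nbhd(2) closure_subset[of \<Omega>] by (intro J_op_efforts[OF nbhd(1)]) auto
  have "((\<lambda>t. Ham \<Omega> u (\<rho> t) (v t) (s t)) has_real_derivative
      - (\<integral>x. energy_flux u \<mu> \<kappa> K (\<rho> t) (v t) (s t) x \<bullet> n x \<partial>\<sigma>)) (at t)" if "t \<in> I" for t
    using gauss pos eq_rho eq_v eq_s that
    by (intro Ham_has_real_derivative_energy_flux[OF dom(1,3) nbhd times that _ u_reg reg]) auto
  then show ?thesis
    unfolding Let_def bnd_pairing_uminus_flows energy_flux_inner
    using J eq_rho eq_v eq_s
    by (auto intro!: has_vector_derivative_Pair simp: has_real_derivative_iff_has_vector_derivative)
qed

end
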